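(* Let $E$ be an arbitrary graph, $X\subseteq{\rm Reg}(E)$, $Y={\rm Reg}(E)\setminus X$, and suppose $E$ satisfies Relative Condition (L). Let $A$ be a ring and $\pi:C_K^X(E)\to A$ a ring homomorphism such that (i) $\pi(u)\neq0$ for every vertex $u\in E^0\setminus Y$; (ii) $\pi\big(v-\sum_{e\in s^{-1}(v)}ee^*\big)\ne0$ for every $v\in Y$; and (iii) $\pi\big(\sum_{e\in s^{-1}(v)}ee^*\big)\neq0$ for every $v\in Y$. Then $\pi$ is injective.
   Context: Let $K$ be a field and $E=(E^0,E^1,r,s)$ a directed graph (no countability or finiteness assumptions). A vertex $v$ is regular if $s^{-1}(v)$ is finite and nonempty; ${\rm Reg}(E)$ is the set of regular vertices. For $X\subseteq{\rm Reg}(E)$, the relative Cohn path algebra $C_K^X(E)$ is the free $K$-algebra generated by $E^0\cup E^1\cup\{e^*:e\in E^1\}$ subject to: $vw=\delta_{v,w}v$; $s(e)e=er(e)=e$ and $r(e)e^*=e^*s(e)=e^*$; $e^*f=\delta_{e,f}r(e)$; $v=\sum_{e\in s^{-1}(v)}ee^*$ for every $v\in X$. A cycle is a path $e_1\cdots e_n$ ($n\ge1$) with $r(e_n)=s(e_1)$ and $s(e_i)\ne s(e_j)$ for $i\ne j$. An exit of $e_1\cdots e_n$ is an edge $e$ with $s(e)=s(e_i)$ for some $i$ and $e\ne e_i$. $E$ satisfies Relative Condition (L) (with respect to $X$) if every cycle $e_1\cdots e_n$ with $s(e_i)\notin Y$ for all $i=1,\dots,n$ has an exit. *)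

theory Defs
  imports Main "HOL-Library.Function_Algebras"
begin

text \<open>A directed graph E = (E0, E1, r, s) is given by a vertex set E0 :: 'v set,
an edge set E1 :: 'e set and range/source maps r s :: 'e => 'v
(assumed to map E1 into E0 in the theorem).\<close>

definition Reg :: "'v set \<Rightarrow> 'e set \<Rightarrow> ('e \<Rightarrow> 'v) \<Rightarrow> 'v set" where
  "Reg E0 E1 s = {v \<in> E0. finite {e \<in> E1. s e = v} \<and> {e \<in> E1. s e = v} \<noteq> {}}"

definition is_cycle :: "'e set \<Rightarrow> ('e \<Rightarrow> 'v) \<Rightarrow> ('e \<Rightarrow> 'v) \<Rightarrow> 'e list \<Rightarrow> bool" where
  "is_cycle E1 r s es \<longleftrightarrow> es \<noteq> [] \<and> set es \<subseteq> E1
     \<and> (\<forall>i. Suc i < length es \<longrightarrow> r (es ! i) = s (es ! Suc i))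
     \<and> r (last es) = s (hd es)
     \<and> inj_on (\<lambda>i. s (es ! i)) {..<length es}"

definition has_exit :: "'e set \<Rightarrow> ('e \<Rightarrow> 'v) \<Rightarrow> 'e list \<Rightarrow> bool" where
  "has_exit E1 s es \<longleftrightarrow> (\<exists>e\<in>E1. \<exists>i<length es. s e = s (es ! i) \<and> e \<noteq> es ! i)"

definition rel_condL :: "'v set \<Rightarrow> 'e set \<Rightarrow> ('e \<Rightarrow> 'v) \<Rightarrow> ('e \<Rightarrow> 'v) \<Rightarrow> 'v set \<Rightarrow> bool" where
  "rel_condL E0 E1 r s X \<longleftrightarrow>
     (\<forall>es. is_cycle E1 r s es \<and> (\<forall>i<length es. s (es ! i) \<notin> Reg E0 E1 s - X)
        \<longrightarrow> has_exit E1 s es)"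

datatype ('v, 'e) cgen = Vx 'v | Ed 'e | Gh 'e  \<comment> \<open>Gh e stands for e^*\<close>

text \<open>Elements of the free algebra: finitely supported K-valued functions on
nonempty words in the generators (pointwise addition from Function_Algebras).\<close>
type_synonym ('v, 'e, 'k) fa = "('v, 'e) cgen list \<Rightarrow> 'k"

definition gens :: "'v set \<Rightarrow> 'e set \<Rightarrow> ('v, 'e) cgen set" where
  "gens E0 E1 = Vx ` E0 \<union> Ed ` E1 \<union> Gh ` E1"

definition FA :: "'v set \<Rightarrow> 'e set \<Rightarrow> ('v, 'e, 'k::field) fa set" where
  "FA E0 E1 = {f. finite {w. f w \<noteq> 0} \<and> (\<forall>w. f w \<noteq> 0 \<longrightarrow> w \<noteq> [] \<and> set w \<subseteq> gens E0 E1)}"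

definition fa_mult :: "('v, 'e, 'k::field) fa \<Rightarrow> ('v, 'e, 'k) fa \<Rightarrow> ('v, 'e, 'k) fa" where
  "fa_mult f g = (\<lambda>w. \<Sum>i\<le>length w. f (take i w) * g (drop i w))"

definition fa_smul :: "'k::field \<Rightarrow> ('v, 'e, 'k) fa \<Rightarrow> ('v, 'e, 'k) fa" where
  "fa_smul k f = (\<lambda>w. k * f w)"

definition gen :: "('v, 'e) cgen \<Rightarrow> ('v, 'e, 'k::field) fa" where
  "gen x = (\<lambda>w. if w = [x] then 1 else 0)"

definition ee_sum :: "'e set \<Rightarrow> ('e \<Rightarrow> 'v) \<Rightarrow> 'v \<Rightarrow> ('v, 'e, 'k::field) fa" where
  "ee_sum E1 s v = (\<Sum>e\<in>{e \<in> E1. s e = v}. fa_mult (gen (Ed e)) (gen (Gh e)))"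

definition cohn_rels :: "'v set \<Rightarrow> 'e set \<Rightarrow> ('e \<Rightarrow> 'v) \<Rightarrow> ('e \<Rightarrow> 'v) \<Rightarrow> 'v set
    \<Rightarrow> ('v, 'e, 'k::field) fa set" where
  "cohn_rels E0 E1 r s X =
     {fa_mult (gen (Vx v)) (gen (Vx w)) - (if v = w then gen (Vx v) else 0) | v w. v \<in> E0 \<and> w \<in> E0}
   \<union> {fa_mult (gen (Vx (s e))) (gen (Ed e)) - gen (Ed e) | e. e \<in> E1}
   \<union> {fa_mult (gen (Ed e)) (gen (Vx (r e))) - gen (Ed e) | e. e \<in> E1}
   \<union> {fa_mult (gen (Vx (r e))) (gen (Gh e)) - gen (Gh e) | e. e \<in> E1}
   \<union> {fa_mult (gen (Gh e)) (gen (Vx (s e))) - gen (Gh e) | e. e \<in> E1}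
   \<union> {fa_mult (gen (Gh e)) (gen (Ed f)) - (if e = f then gen (Vx (r e)) else 0) | e f. e \<in> E1 \<and> f \<in> E1}
   \<union> {gen (Vx v) - ee_sum E1 s v | v. v \<in> X}"

inductive_set cohn_ideal :: "'v set \<Rightarrow> 'e set \<Rightarrow> ('e \<Rightarrow> 'v) \<Rightarrow> ('e \<Rightarrow> 'v) \<Rightarrow> 'v set
    \<Rightarrow> ('v, 'e, 'k::field) fa set"
  for E0 E1 r s X where
  rel: "\<rho> \<in> cohn_rels E0 E1 r s X \<Longrightarrow> \<rho> \<in> cohn_ideal E0 E1 r s X"
| zero: "0 \<in> cohn_ideal E0 E1 r s X"
| add: "a \<in> cohn_ideal E0 E1 r s X \<Longrightarrow> b \<in> cohn_ideal E0 E1 r s X \<Longrightarrow> a + b \<in> cohn_ideal E0 E1 r s X"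
| smul: "a \<in> cohn_ideal E0 E1 r s X \<Longrightarrow> fa_smul k a \<in> cohn_ideal E0 E1 r s X"
| lmul: "f \<in> FA E0 E1 \<Longrightarrow> a \<in> cohn_ideal E0 E1 r s X \<Longrightarrow> fa_mult f a \<in> cohn_ideal E0 E1 r s X"
| rmul: "f \<in> FA E0 E1 \<Longrightarrow> a \<in> cohn_ideal E0 E1 r s X \<Longrightarrow> fa_mult a f \<in> cohn_ideal E0 E1 r s X"

definition cclass :: "'v set \<Rightarrow> 'e set \<Rightarrow> ('e \<Rightarrow> 'v) \<Rightarrow> ('e \<Rightarrow> 'v) \<Rightarrow> 'v set
    \<Rightarrow> ('v, 'e, 'k::field) fa \<Rightarrow> ('v, 'e, 'k) fa set" where
  "cclass E0 E1 r s X f = {g \<in> FA E0 E1. g - f \<in> cohn_ideal E0 E1 r s X}"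

definition Cohn :: "'v set \<Rightarrow> 'e set \<Rightarrow> ('e \<Rightarrow> 'v) \<Rightarrow> ('e \<Rightarrow> 'v) \<Rightarrow> 'v set
    \<Rightarrow> ('v, 'e, 'k::field) fa set set" where
  "Cohn E0 E1 r s X = cclass E0 E1 r s X ` FA E0 E1"

definition crep :: "('v, 'e, 'k::field) fa set \<Rightarrow> ('v, 'e, 'k) fa" where
  "crep S = (SOME f. f \<in> S)"

definition cohn_add :: "'v set \<Rightarrow> 'e set \<Rightarrow> ('e \<Rightarrow> 'v) \<Rightarrow> ('e \<Rightarrow> 'v) \<Rightarrow> 'v set
    \<Rightarrow> ('v, 'e, 'k::field) fa set \<Rightarrow> ('v, 'e, 'k) fa set \<Rightarrow> ('v, 'e, 'k) fa set" where
  "cohn_add E0 E1 r s X S T = cclass E0 E1 r s X (crep S + crep T)"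

definition cohn_mult :: "'v set \<Rightarrow> 'e set \<Rightarrow> ('e \<Rightarrow> 'v) \<Rightarrow> ('e \<Rightarrow> 'v) \<Rightarrow> 'v set
    \<Rightarrow> ('v, 'e, 'k::field) fa set \<Rightarrow> ('v, 'e, 'k) fa set \<Rightarrow> ('v, 'e, 'k) fa set" where
  "cohn_mult E0 E1 r s X S T = cclass E0 E1 r s X (fa_mult (crep S) (crep T))"

definition cohn_ring_hom :: "'v set \<Rightarrow> 'e set \<Rightarrow> ('e \<Rightarrow> 'v) \<Rightarrow> ('e \<Rightarrow> 'v) \<Rightarrow> 'v set
    \<Rightarrow> (('v, 'e, 'k::field) fa set \<Rightarrow> 'a::ring) \<Rightarrow> bool" where
  "cohn_ring_hom E0 E1 r s X \<pi> \<longleftrightarrow>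
     (\<forall>S\<in>Cohn E0 E1 r s X. \<forall>T\<in>Cohn E0 E1 r s X.
        \<pi> (cohn_add E0 E1 r s X S T) = \<pi> S + \<pi> T
      \<and> \<pi> (cohn_mult E0 E1 r s X S T) = \<pi> S * \<pi> T)"

end

theory Submission
  imports Defs
begin

text \<open>
  Realise \<open>C\<^sub>K\<^sup>X(E)\<close> as the free algebra modulo the Cohn ideal and pull the kernel of \<open>\<pi>\<close> back
  to a set \<open>K\<close> of elements of the free algebra. \<open>K\<close> is closed under multiplication by arbitrary
  elements on either side and under congruence modulo the Cohn ideal, and by (i) and (ii) it contains
  no nonzero multiple of a vertex \<open>u \<notin> Y\<close> and none of \<open>q\<^sub>v = v - \<Sum> e e\<^sup>*\<close> for \<open>v \<in> Y\<close>.
  We show that every element of \<open>K\<close> lies in the Cohn ideal.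

  Every element is congruent to a linear combination of monomials \<open>\<gamma> \<nu>\<^sup>*\<close>. By induction on the
  length of the ghost parts, after splitting according to the source \<open>v\<close> of \<open>\<nu>\<close>: multiplying on
  the right by an edge \<open>e\<close> out of \<open>v\<close> shortens the ghost parts, so all these products vanish, and
  this kills the combination if \<open>v \<in> X\<close> (as \<open>v = \<Sum> e e\<^sup>*\<close>) or if no \<open>\<nu>\<close> is trivial. What remains is
  a relation \<open>\<Sum> c\<^sub>\<gamma> \<gamma> v\<close> or \<open>\<Sum> c\<^sub>\<gamma> \<gamma> q\<^sub>v\<close> in \<open>K\<close>; if \<open>v\<close> emits infinitely many edges, the first form
  also arises after multiplying by an edge that starts none of the \<open>\<nu>\<close>.

  Multiplying such a relation on the left by \<open>\<gamma>\<^sub>0\<^sup>*\<close> for a shortest \<open>\<gamma>\<^sub>0\<close> with \<open>c\<^sub>\<gamma>\<^sub>0 \<noteq> 0\<close> leaves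
  \<open>c\<^sub>\<gamma>\<^sub>0 v + \<Sum> c\<^sub>\<delta> \<delta>\<close> (times \<open>v\<close> or \<open>q\<^sub>v\<close>) with closed paths \<open>\<delta>\<close> at \<open>v\<close>. Multiplying by \<open>q\<^sub>v\<close> kills the
  \<open>\<delta>\<close> when \<open>v \<in> Y\<close>; otherwise conjugating by an edge \<open>f\<close> at \<open>v\<close> rotates the closed paths beginning
  with \<open>f\<close>. This strictly lowers the number of paths, or keeps it and shortens the initial run of a
  path through vertices of \<open>X\<close> with a single outgoing edge; such a run cannot be the whole path,
  since otherwise the path contains a cycle without exits, contradicting Relative Condition (L).
\<close>

section \<open>The free algebra\<close>

lemma fa_mult_assoc:
  "fa_mult (fa_mult f g) h = fa_mult f (fa_mult (g :: ('v, 'e, 'k::field) fa) h)"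
proof
  fix w :: "('v, 'e) cgen list"
  define n where "n = length w"
  define F where "F = (\<lambda>j l. f (take j w) * g (take l (drop j w)) * h (drop (j + l) w))"
  have pairs: "{(j, l). j + l \<le> n} = Sigma {..n} (\<lambda>j. {..n - j})" by auto
  have "fa_mult (fa_mult f g) h w = (\<Sum>k\<le>n. \<Sum>j\<le>k. F j (k - j))"
    unfolding fa_mult_def n_def F_def
    by (auto simp: sum_distrib_right drop_take min_def intro!: sum.cong)
  also have "\<dots> = (\<Sum>(j, l)\<in>{(j, l). j + l \<le> n}. F j l)"
    by (rule sum.triangle_reindex_eq[symmetric])
  also have "\<dots> = (\<Sum>j\<le>n. \<Sum>l\<le>n - j. F j l)"
    unfolding pairs by (simp add: sum.Sigma)
  also have "\<dots> = fa_mult f (fa_mult g h) w"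
    unfolding fa_mult_def n_def F_def
    by (auto simp: sum_distrib_left mult.assoc add.commute intro!: sum.cong)
  finally show "fa_mult (fa_mult f g) h w = fa_mult f (fa_mult g h) w" .
qed

definition fa_one :: "('v, 'e, 'k::field) fa" where
  "fa_one = (\<lambda>w. if w = [] then 1 else 0)"

lemma fa_mult_one_left: "fa_mult fa_one f = f"
proof
  fix w
  have "fa_mult fa_one f w = (\<Sum>i\<le>length w. if i = 0 then f w else 0)"
    unfolding fa_mult_def fa_one_def by (intro sum.cong) auto
  then show "fa_mult fa_one f w = f w" by (simp add: sum.delta)
qed

lemma fa_mult_one_right: "fa_mult f fa_one = f"
proof
  fix w
  have "fa_mult f fa_one w = (\<Sum>i\<le>length w. if i = length w then f w else 0)"
    unfolding fa_mult_def fa_one_def by (intro sum.cong) auto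
  then show "fa_mult f fa_one w = f w" by (simp add: sum.delta)
qed

lemma fa_mult_add_left: "fa_mult (f + g) h = fa_mult f h + fa_mult g h"
  unfolding fa_mult_def by (auto simp: sum.distrib distrib_right)

lemma fa_mult_add_right: "fa_mult f (g + h) = fa_mult f g + fa_mult f h"
  unfolding fa_mult_def by (auto simp: sum.distrib distrib_left)

text \<open>Adjoining the empty word to the coefficient functions gives the unital free algebra, which
  we make a type so that the ring automation of the library applies to it.\<close>

datatype ('v, 'e, 'k) ncpoly = NCPoly (coeffs: "('v, 'e, 'k) fa")

lemma ncpoly_eqI: "coeffs x = coeffs y \<Longrightarrow> x = y"
  by (cases x, cases y) auto

instantiation ncpoly :: (type, type, field) ring_1
begin
definition "0 = NCPoly 0"
definition "1 = NCPoly fa_one"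
definition "x + y = NCPoly (coeffs x + coeffs y)"
definition "x - y = NCPoly (coeffs x - coeffs y)"
definition "- x = NCPoly (- coeffs x)"
definition "x * y = NCPoly (fa_mult (coeffs x) (coeffs y))"
instance
proof
  fix a b c :: "('a, 'b, 'c) ncpoly"
  show "a * b * c = a * (b * c)" by (simp add: times_ncpoly_def fa_mult_assoc)
  show "1 * a = a" by (cases a) (simp add: times_ncpoly_def one_ncpoly_def fa_mult_one_left)
  show "a * 1 = a" by (cases a) (simp add: times_ncpoly_def one_ncpoly_def fa_mult_one_right)
  show "(a + b) * c = a * c + b * c"
    by (simp add: times_ncpoly_def plus_ncpoly_def fa_mult_add_left)
  show "a * (b + c) = a * b + a * c"
    by (simp add: times_ncpoly_def plus_ncpoly_def fa_mult_add_right)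
  show "a + b + c = a + (b + c)" by (simp add: plus_ncpoly_def add.assoc)
  show "a + b = b + a" by (simp add: plus_ncpoly_def add.commute)
  show "0 + a = a" by (cases a) (simp add: plus_ncpoly_def zero_ncpoly_def)
  show "- a + a = 0" by (simp add: plus_ncpoly_def uminus_ncpoly_def zero_ncpoly_def)
  show "a - b = a + - b" by (simp add: plus_ncpoly_def uminus_ncpoly_def minus_ncpoly_def)
  show "(0 :: ('a, 'b, 'c) ncpoly) \<noteq> 1"
    by (simp add: zero_ncpoly_def one_ncpoly_def fa_one_def fun_eq_iff)
qed
end

lemma coeffs_simps [simp]:
  "coeffs (x + y) = coeffs x + coeffs y" "coeffs (x - y) = coeffs x - coeffs y"
  "coeffs (- x) = - coeffs x" "coeffs (x * y) = fa_mult (coeffs x) (coeffs y)" "coeffs 0 = 0"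
  by (simp_all add: plus_ncpoly_def minus_ncpoly_def uminus_ncpoly_def times_ncpoly_def
      zero_ncpoly_def)

lemma coeffs_sum: "coeffs (sum f A) = (\<Sum>a\<in>A. coeffs (f a))"
  by (induction A rule: infinite_finite_induct) auto

definition smult :: "'k::field \<Rightarrow> ('v, 'e, 'k) ncpoly \<Rightarrow> ('v, 'e, 'k) ncpoly" where
  "smult k x = NCPoly (fa_smul k (coeffs x))"

lemma coeffs_smult [simp]: "coeffs (smult k x) = fa_smul k (coeffs x)"
  by (simp add: smult_def)

lemma smult_mult_left [simp]: "smult k x * y = smult k (x * y)"
  by (rule ncpoly_eqI) (simp add: fa_mult_def fa_smul_def sum_distrib_left mult.assoc)

lemma smult_mult_right [simp]: "x * smult k y = smult k (x * y)"
  by (rule ncpoly_eqI) (simp add: fa_mult_def fa_smul_def sum_distrib_left mult.left_commute)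

lemma smult_add_right [simp]: "smult k (x + y) = smult k x + smult k y"
  by (rule ncpoly_eqI) (simp add: fa_smul_def distrib_left plus_fun_def)

lemma smult_diff_right [simp]: "smult k (x - y) = smult k x - smult k y"
  by (rule ncpoly_eqI) (simp add: fa_smul_def right_diff_distrib fun_diff_def)

lemma smult_add_left: "smult (k + l) x = smult k x + smult l x"
  by (rule ncpoly_eqI) (simp add: fa_smul_def distrib_right plus_fun_def)

lemma smult_smult [simp]: "smult k (smult l x) = smult (k * l) x"
  by (rule ncpoly_eqI) (simp add: fa_smul_def mult.assoc)

lemma smult_one [simp]: "smult 1 x = x"
  by (rule ncpoly_eqI) (simp add: fa_smul_def)

lemma smult_zero [simp]: "smult 0 x = 0" "smult k 0 = 0"
  by (rule ncpoly_eqI; simp add: fa_smul_def zero_fun_def)+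

lemma smult_minus_one: "smult (-1) x = - x"
  by (rule ncpoly_eqI) (simp add: fa_smul_def fun_Compl_def)

lemma smult_sum_right: "smult k (sum f A) = (\<Sum>a\<in>A. smult k (f a))"
  by (induction A rule: infinite_finite_induct) auto

lemma smult_sum_left: "smult (sum f A) x = (\<Sum>a\<in>A. smult (f a) x)"
  by (induction A rule: infinite_finite_induct) (auto simp: smult_add_left)

lemma sum_smult_image:
  "finite I \<Longrightarrow> (\<Sum>i\<in>I. smult (c i) (F (g i))) = (\<Sum>x\<in>g ` I. smult (\<Sum>i\<in>{i\<in>I. g i = x}. c i) (F x))"
  by (simp add: sum.image_gen[of I _ g] smult_sum_left)

lemma sum_fun_apply: "sum f S x = (\<Sum>a\<in>S. f a x)"
  by (induction S rule: infinite_finite_induct) auto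

definition word :: "('v, 'e) cgen list \<Rightarrow> ('v, 'e, 'k::field) ncpoly" where
  "word w = NCPoly (\<lambda>u. if u = w then 1 else 0)"

lemma word_Cons: "word (a # as) = NCPoly (gen a) * (word as :: ('v, 'e, 'k::field) ncpoly)"
proof (rule ncpoly_eqI, rule ext)
  fix u
  have summand:
    "gen a (take i u) * coeffs (word as) (drop i u) = (if i = 1 \<and> u = a # as then 1 else 0)"
    if "i \<le> length u" for i
    using that by (cases u; cases i) (auto simp: gen_def word_def)
  have "coeffs (NCPoly (gen a) * word as) u = (\<Sum>i\<le>length u. if i = 1 \<and> u = a # as then 1 else 0)"
    by (simp add: fa_mult_def summand)
  also have "\<dots> = coeffs (word (a # as)) u"
    by (cases u) (auto simp: word_def sum.delta Suc_le_eq)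
  finally show "coeffs (word (a # as)) u = coeffs (NCPoly (gen a) * word as) u" ..
qed

lemma ncpoly_word_expansion:
  assumes "finite {w. f w \<noteq> 0}"
  shows "NCPoly f = (\<Sum>w\<in>{w. f w \<noteq> 0}. smult (f w) (word w))"
proof (rule ncpoly_eqI, rule ext)
  fix u
  have "coeffs (\<Sum>w\<in>{w. f w \<noteq> 0}. smult (f w) (word w)) u
      = (\<Sum>w\<in>{w. f w \<noteq> 0}. if u = w then f w else 0)"
    by (auto simp: coeffs_sum word_def fa_smul_def sum_fun_apply intro!: sum.cong)
  also have "\<dots> = f u" using assms by (cases "f u = 0") (auto simp: sum.delta)
  finally show "coeffs (NCPoly f) u = coeffs (\<Sum>w\<in>{w. f w \<noteq> 0}. smult (f w) (word w)) u" by simp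
qed

lemma FA_add: "f \<in> FA E0 E1 \<Longrightarrow> g \<in> FA E0 E1 \<Longrightarrow> f + g \<in> FA E0 E1"
proof -
  assume "f \<in> FA E0 E1" "g \<in> FA E0 E1"
  moreover have "{w. (f + g) w \<noteq> 0} \<subseteq> {w. f w \<noteq> 0} \<union> {w. g w \<noteq> 0}" by auto
  ultimately show ?thesis unfolding FA_def by (auto intro: finite_subset)
qed

lemma FA_smul: "f \<in> FA E0 E1 \<Longrightarrow> fa_smul k f \<in> FA E0 E1"
proof -
  assume "f \<in> FA E0 E1"
  moreover have "{w. fa_smul k f w \<noteq> 0} \<subseteq> {w. f w \<noteq> 0}" by (auto simp: fa_smul_def)
  ultimately show ?thesis unfolding FA_def by (auto intro: finite_subset simp: fa_smul_def)
qed

lemma FA_zero: "0 \<in> FA E0 E1"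
  by (simp add: FA_def)

lemma FA_diff: "f \<in> FA E0 E1 \<Longrightarrow> g \<in> FA E0 E1 \<Longrightarrow> f - g \<in> FA E0 E1"
  using FA_add[of f E0 E1 "fa_smul (-1) g"] FA_smul[of g E0 E1 "-1"]
  by (simp add: fa_smul_def fun_diff_def plus_fun_def)

lemma fa_mult_nonzero_split:
  assumes "fa_mult f g w \<noteq> 0"
  obtains i where "f (take i w) \<noteq> 0" "g (drop i w) \<noteq> 0"
proof -
  have "\<exists>i. f (take i w) \<noteq> 0 \<and> g (drop i w) \<noteq> 0"
  proof (rule ccontr)
    assume "\<not> ?thesis"
    then have "fa_mult f g w = 0" unfolding fa_mult_def by (intro sum.neutral) auto
    with assms show False by simp
  qed
  then show ?thesis using that by blast
qed

lemma FA_mult: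
  assumes f: "f \<in> FA E0 E1" and g: "g \<in> FA E0 E1"
  shows "fa_mult f g \<in> FA E0 E1"
proof -
  have "{w. fa_mult f g w \<noteq> 0} \<subseteq> (\<lambda>(u, v). u @ v) ` ({w. f w \<noteq> 0} \<times> {w. g w \<noteq> 0})"
  proof
    fix w assume "w \<in> {w. fa_mult f g w \<noteq> 0}"
    then obtain i where "f (take i w) \<noteq> 0" "g (drop i w) \<noteq> 0"
      by (auto elim: fa_mult_nonzero_split)
    then show "w \<in> (\<lambda>(u, v). u @ v) ` ({w. f w \<noteq> 0} \<times> {w. g w \<noteq> 0})"
      by (intro image_eqI[of _ _ "(take i w, drop i w)"]) auto
  qed
  moreover have "finite ((\<lambda>(u, v). u @ v) ` ({w. f w \<noteq> 0} \<times> {w. g w \<noteq> 0}))"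
    using f g unfolding FA_def by auto
  moreover have "w \<noteq> [] \<and> set w \<subseteq> gens E0 E1" if nz: "fa_mult f g w \<noteq> 0" for w
  proof -
    obtain i where "f (take i w) \<noteq> 0" "g (drop i w) \<noteq> 0"
      by (rule fa_mult_nonzero_split[OF nz])
    then have "take i w \<noteq> []" "set (take i w) \<subseteq> gens E0 E1" "set (drop i w) \<subseteq> gens E0 E1"
      using f g unfolding FA_def by auto
    then show ?thesis by (metis append_take_drop_id set_append take_Nil Un_least)
  qed
  ultimately show ?thesis unfolding FA_def by (auto intro: finite_subset)
qed

lemma FA_sum: "(\<And>a. a \<in> S \<Longrightarrow> f a \<in> FA E0 E1) \<Longrightarrow> sum f S \<in> FA E0 E1"
  by (induction S rule: infinite_finite_induct) (auto intro: FA_add FA_zero)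

lemma gens_iff [simp]:
  "Vx v \<in> gens E0 E1 \<longleftrightarrow> v \<in> E0" "Ed e \<in> gens E0 E1 \<longleftrightarrow> e \<in> E1" "Gh e \<in> gens E0 E1 \<longleftrightarrow> e \<in> E1"
  by (auto simp: gens_def)

lemma FA_gen: "x \<in> gens E0 E1 \<Longrightarrow> gen x \<in> FA E0 E1"
  unfolding FA_def gen_def by auto

lemma cohn_ideal_subset_FA:
  assumes "s ` E1 \<subseteq> E0" "r ` E1 \<subseteq> E0" "X \<subseteq> E0"
  shows "cohn_ideal E0 E1 r s X \<subseteq> FA E0 E1"
proof
  fix a assume "a \<in> cohn_ideal E0 E1 r s X"
  then show "a \<in> FA E0 E1"
  proof (induction a rule: cohn_ideal.induct)
    case (rel \<rho>)
    have vtx: "v \<in> E0 \<Longrightarrow> gen (Vx v) \<in> FA E0 E1" for v by (simp add: FA_gen)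
    have edge: "e \<in> E1 \<Longrightarrow> gen (Ed e) \<in> FA E0 E1" for e by (simp add: FA_gen)
    have ghost: "e \<in> E1 \<Longrightarrow> gen (Gh e) \<in> FA E0 E1" for e by (simp add: FA_gen)
    have ee: "ee_sum E1 s v \<in> FA E0 E1" for v
      unfolding ee_sum_def by (rule FA_sum) (auto intro: FA_mult edge ghost)
    have if_zero: "a \<in> FA E0 E1 \<Longrightarrow> (if P then a else 0) \<in> FA E0 E1" for a P
      by (simp add: FA_zero)
    have ends: "e \<in> E1 \<Longrightarrow> s e \<in> E0" "e \<in> E1 \<Longrightarrow> r e \<in> E0" for e
      using assms(1,2) by auto
    from rel.hyps show ?case
      unfolding cohn_rels_def
      by (elim UnE)
        (blast intro: FA_diff FA_mult vtx edge ghost ee if_zero ends subsetD[OF assms(3)])+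
  qed (blast intro: FA_zero FA_add FA_smul FA_mult)+
qed

section \<open>The Cohn relations\<close>

locale cohn_graph =
  fixes E0 :: "'v set" and E1 :: "'e set" and r s :: "'e \<Rightarrow> 'v" and X :: "'v set"
  assumes source_in_E0: "s ` E1 \<subseteq> E0" and range_in_E0: "r ` E1 \<subseteq> E0"
    and X_subset_Reg: "X \<subseteq> Reg E0 E1 s"
begin

lemma s_in_E0 [simp]: "e \<in> E1 \<Longrightarrow> s e \<in> E0"
  using source_in_E0 by auto

lemma r_in_E0 [simp]: "e \<in> E1 \<Longrightarrow> r e \<in> E0"
  using range_in_E0 by auto

lemma Reg_in_E0: "v \<in> Reg E0 E1 s \<Longrightarrow> v \<in> E0"
  by (simp add: Reg_def)

definition in_FA :: "('v, 'e, 'k::field) ncpoly \<Rightarrow> bool" where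
  "in_FA x \<longleftrightarrow> coeffs x \<in> FA E0 E1"

definition in_ideal :: "('v, 'e, 'k::field) ncpoly \<Rightarrow> bool" where
  "in_ideal x \<longleftrightarrow> coeffs x \<in> cohn_ideal E0 E1 r s X"

definition cohn_eq :: "('v, 'e, 'k::field) ncpoly \<Rightarrow> ('v, 'e, 'k) ncpoly \<Rightarrow> bool" (infix "\<approx>" 50)
  where "x \<approx> y \<longleftrightarrow> in_ideal (x - y)"

definition gen_poly :: "('v, 'e) cgen \<Rightarrow> ('v, 'e, 'k::field) ncpoly" where
  "gen_poly x = NCPoly (gen x)"

abbreviation vtx :: "'v \<Rightarrow> ('v, 'e, 'k::field) ncpoly" where "vtx v \<equiv> gen_poly (Vx v)"
abbreviation edge :: "'e \<Rightarrow> ('v, 'e, 'k::field) ncpoly" where "edge e \<equiv> gen_poly (Ed e)"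
abbreviation ghost :: "'e \<Rightarrow> ('v, 'e, 'k::field) ncpoly" where "ghost e \<equiv> gen_poly (Gh e)"

definition out_edges :: "'v \<Rightarrow> 'e set" where
  "out_edges v = {e \<in> E1. s e = v}"

definition ee :: "'v \<Rightarrow> ('v, 'e, 'k::field) ncpoly" where
  "ee v = (\<Sum>e\<in>out_edges v. edge e * ghost e)"

definition q :: "'v \<Rightarrow> ('v, 'e, 'k::field) ncpoly" where
  "q v = vtx v - ee v"

lemma coeffs_ee: "coeffs (ee v) = ee_sum E1 s v"
  by (simp add: ee_def ee_sum_def out_edges_def coeffs_sum gen_poly_def)

lemma out_edgesI [intro]: "e \<in> E1 \<Longrightarrow> e \<in> out_edges (s e)"
  and out_edgesD: "e \<in> out_edges v \<Longrightarrow> e \<in> E1 \<and> s e = v"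
  by (auto simp: out_edges_def)

lemma finite_out_edges: "v \<in> Reg E0 E1 s \<Longrightarrow> finite (out_edges v)"
  by (simp add: Reg_def out_edges_def)

lemma in_FA_add [intro!]: "in_FA x \<Longrightarrow> in_FA y \<Longrightarrow> in_FA (x + y)"
  and in_FA_diff [intro!]: "in_FA x \<Longrightarrow> in_FA y \<Longrightarrow> in_FA (x - y)"
  and in_FA_mult [intro!]: "in_FA x \<Longrightarrow> in_FA y \<Longrightarrow> in_FA (x * y)"
  and in_FA_smult [intro!]: "in_FA x \<Longrightarrow> in_FA (smult k x)"
  and in_FA_zero [intro!, simp]: "in_FA 0"
  by (simp_all add: in_FA_def FA_add FA_diff FA_mult FA_smul FA_zero)

lemma in_FA_sum [intro!]: "(\<And>a. a \<in> S \<Longrightarrow> in_FA (f a)) \<Longrightarrow> in_FA (sum f S)"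
  by (simp add: in_FA_def coeffs_sum FA_sum)

lemma in_FA_gen_poly [intro!, simp]: "x \<in> gens E0 E1 \<Longrightarrow> in_FA (gen_poly x)"
  by (simp add: in_FA_def gen_poly_def FA_gen)

lemma in_FA_ee [intro!, simp]: "in_FA (ee v)"
  unfolding ee_def by (auto simp: out_edges_def)

lemma in_FA_q [intro!, simp]: "v \<in> E0 \<Longrightarrow> in_FA (q v)"
  unfolding q_def by auto

lemma in_ideal_in_FA: "in_ideal x \<Longrightarrow> in_FA x"
  using cohn_ideal_subset_FA[OF source_in_E0 range_in_E0] X_subset_Reg
  by (auto simp: in_ideal_def in_FA_def Reg_def)

lemma in_ideal_zero [intro!, simp]: "in_ideal 0"
  and in_ideal_add [intro!]: "in_ideal x \<Longrightarrow> in_ideal y \<Longrightarrow> in_ideal (x + y)"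
  and in_ideal_smult [intro!]: "in_ideal x \<Longrightarrow> in_ideal (smult k x)"
  and in_ideal_mult_left [intro]: "in_FA z \<Longrightarrow> in_ideal x \<Longrightarrow> in_ideal (z * x)"
  and in_ideal_mult_right [intro]: "in_FA z \<Longrightarrow> in_ideal x \<Longrightarrow> in_ideal (x * z)"
  by (simp_all add: in_ideal_def in_FA_def cohn_ideal.intros)

lemma in_ideal_diff [intro!]: "in_ideal x \<Longrightarrow> in_ideal y \<Longrightarrow> in_ideal (x - y)"
  using in_ideal_add[of x "smult (-1) y"] in_ideal_smult[of y "-1"] by (simp add: smult_minus_one)

lemma in_ideal_sum [intro!]: "(\<And>a. a \<in> S \<Longrightarrow> in_ideal (f a)) \<Longrightarrow> in_ideal (sum f S)"
  by (induction S rule: infinite_finite_induct) auto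

lemma cohn_eq_refl [intro!, simp]: "x \<approx> x"
  by (simp add: cohn_eq_def)

lemma cohn_eq_sym: "x \<approx> y \<Longrightarrow> y \<approx> x"
  unfolding cohn_eq_def using in_ideal_diff[of 0 "x - y"] by simp

lemma cohn_eq_trans [trans]: "x \<approx> y \<Longrightarrow> y \<approx> z \<Longrightarrow> x \<approx> z"
  unfolding cohn_eq_def using in_ideal_add[of "x - y" "y - z"] by simp

lemma cohn_eq_add [intro]: "x \<approx> y \<Longrightarrow> x' \<approx> y' \<Longrightarrow> x + x' \<approx> y + y'"
  unfolding cohn_eq_def using in_ideal_add[of "x - y" "x' - y'"] by (simp add: algebra_simps)

lemma cohn_eq_diff [intro]: "x \<approx> y \<Longrightarrow> x' \<approx> y' \<Longrightarrow> x - x' \<approx> y - y'"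
  unfolding cohn_eq_def using in_ideal_diff[of "x - y" "x' - y'"] by (simp add: algebra_simps)

lemma cohn_eq_smult [intro]: "x \<approx> y \<Longrightarrow> smult k x \<approx> smult k y"
  unfolding cohn_eq_def using in_ideal_smult[of "x - y" k] by simp

lemma cohn_eq_mult_left [intro]: "in_FA z \<Longrightarrow> x \<approx> y \<Longrightarrow> z * x \<approx> z * y"
  unfolding cohn_eq_def using in_ideal_mult_left[of z "x - y"] by (simp add: right_diff_distrib)

lemma cohn_eq_mult_right [intro]: "in_FA z \<Longrightarrow> x \<approx> y \<Longrightarrow> x * z \<approx> y * z"
  unfolding cohn_eq_def using in_ideal_mult_right[of z "x - y"] by (simp add: left_diff_distrib)

lemma cohn_eq_mult: "in_FA x \<Longrightarrow> in_FA y' \<Longrightarrow> x \<approx> y \<Longrightarrow> x' \<approx> y' \<Longrightarrow> x * x' \<approx> y * y'"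
  by (meson cohn_eq_mult_left cohn_eq_mult_right cohn_eq_trans)

lemma cohn_eq_sum [intro]: "(\<And>a. a \<in> S \<Longrightarrow> f a \<approx> g a) \<Longrightarrow> sum f S \<approx> sum g S"
  unfolding cohn_eq_def using in_ideal_sum[of S "\<lambda>a. f a - g a"] by (simp add: sum_subtractf)

lemma cohn_eq_in_FA: "in_FA x \<Longrightarrow> x \<approx> y \<Longrightarrow> in_FA y"
  unfolding cohn_eq_def using in_FA_diff[of x "x - y"] in_ideal_in_FA[of "x - y"]
  by (simp add: algebra_simps)

lemma cohn_eq_relI: "coeffs x - coeffs y \<in> cohn_rels E0 E1 r s X \<Longrightarrow> x \<approx> y"
  by (simp add: cohn_eq_def in_ideal_def cohn_ideal.rel)

lemma vtx_vtx_rel: "v \<in> E0 \<Longrightarrow> w \<in> E0 \<Longrightarrow> vtx v * vtx w \<approx> (if v = w then vtx v else 0)"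
  by (rule cohn_eq_relI) (auto simp: cohn_rels_def gen_poly_def if_distrib[of coeffs])

lemma vtx_edge_rel: "e \<in> E1 \<Longrightarrow> vtx (s e) * edge e \<approx> edge e"
  by (rule cohn_eq_relI) (auto simp: cohn_rels_def gen_poly_def)

lemma edge_vtx_rel: "e \<in> E1 \<Longrightarrow> edge e * vtx (r e) \<approx> edge e"
  by (rule cohn_eq_relI) (auto simp: cohn_rels_def gen_poly_def)

lemma vtx_ghost_rel: "e \<in> E1 \<Longrightarrow> vtx (r e) * ghost e \<approx> ghost e"
  by (rule cohn_eq_relI) (auto simp: cohn_rels_def gen_poly_def)

lemma ghost_vtx_rel: "e \<in> E1 \<Longrightarrow> ghost e * vtx (s e) \<approx> ghost e"
  by (rule cohn_eq_relI) (auto simp: cohn_rels_def gen_poly_def)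

lemma ghost_edge_rel:
  "e \<in> E1 \<Longrightarrow> f \<in> E1 \<Longrightarrow> ghost e * edge f \<approx> (if e = f then vtx (r e) else 0)"
  by (rule cohn_eq_relI) (auto simp: cohn_rels_def gen_poly_def if_distrib[of coeffs])

lemma vtx_ee_rel: "v \<in> X \<Longrightarrow> vtx v \<approx> ee v"
  by (rule cohn_eq_relI) (auto simp: cohn_rels_def gen_poly_def coeffs_ee)

lemma vtx_edge:
  assumes "u \<in> E0" "e \<in> E1"
  shows "vtx u * edge e \<approx> (if u = s e then edge e else 0)"
proof (cases "u = s e")
  case True then show ?thesis using vtx_edge_rel[OF assms(2)] by simp
next
  case False
  have "vtx u * edge e \<approx> vtx u * (vtx (s e) * edge e)"
    using assms by (intro cohn_eq_mult_left cohn_eq_sym[OF vtx_edge_rel]) auto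
  also have "\<dots> = (vtx u * vtx (s e)) * edge e" by (simp add: mult.assoc)
  also have "\<dots> \<approx> 0 * edge e"
    using assms False vtx_vtx_rel[of u "s e"] by (intro cohn_eq_mult_right) auto
  finally show ?thesis using False by simp
qed

lemma ghost_vtx:
  assumes "u \<in> E0" "e \<in> E1"
  shows "ghost e * vtx u \<approx> (if u = s e then ghost e else 0)"
proof (cases "u = s e")
  case True then show ?thesis using ghost_vtx_rel[OF assms(2)] by simp
next
  case False
  have "ghost e * vtx u \<approx> (ghost e * vtx (s e)) * vtx u"
    using assms by (intro cohn_eq_mult_right cohn_eq_sym[OF ghost_vtx_rel]) auto
  also have "\<dots> = ghost e * (vtx (s e) * vtx u)" by (simp add: mult.assoc)
  also have "\<dots> \<approx> ghost e * 0"
    using assms False vtx_vtx_rel[of "s e" u] by (intro cohn_eq_mult_left) auto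
  finally show ?thesis using False by simp
qed

lemma ghost_edge_same: "e \<in> E1 \<Longrightarrow> ghost e * edge e \<approx> vtx (r e)"
  using ghost_edge_rel[of e e] by simp

lemma ghost_edge_diff: "e \<in> E1 \<Longrightarrow> f \<in> E1 \<Longrightarrow> e \<noteq> f \<Longrightarrow> ghost e * edge f \<approx> 0"
  using ghost_edge_rel[of e f] by simp

text \<open>Paths are edge lists read from left to right; \<open>path_to w es\<close> says that \<open>es\<close> is a path
  ending at the vertex \<open>w\<close>, which also serves as the path of length zero at \<open>w\<close>.\<close>

definition path_src :: "'v \<Rightarrow> 'e list \<Rightarrow> 'v" where
  "path_src w es = (if es = [] then w else s (hd es))"

fun path_to :: "'v \<Rightarrow> 'e list \<Rightarrow> bool" where
  "path_to w [] \<longleftrightarrow> w \<in> E0"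
| "path_to w (e # es) \<longleftrightarrow> e \<in> E1 \<and> r e = path_src w es \<and> path_to w es"

fun path :: "'v \<Rightarrow> 'e list \<Rightarrow> ('v, 'e, 'k::field) ncpoly" where
  "path w [] = vtx w"
| "path w (e # es) = edge e * path w es"

fun ghost_path :: "'v \<Rightarrow> 'e list \<Rightarrow> ('v, 'e, 'k::field) ncpoly" where
  "ghost_path w [] = vtx w"
| "ghost_path w (e # es) = ghost_path w es * ghost e"

lemma path_src_Nil [simp]: "path_src w [] = w"
  and path_src_Cons [simp]: "path_src w (e # es) = s e"
  by (auto simp: path_src_def)

lemma path_to_E0: "path_to w es \<Longrightarrow> w \<in> E0"
  by (induction es) auto

lemma path_src_E0: "path_to w es \<Longrightarrow> path_src w es \<in> E0"
  by (cases es) (auto dest: path_to_E0)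

lemma in_FA_path [intro, simp]: "path_to w es \<Longrightarrow> in_FA (path w es)"
  by (induction es) auto

lemma in_FA_ghost_path [intro, simp]: "path_to w es \<Longrightarrow> in_FA (ghost_path w es)"
  by (induction es) auto

lemma path_vtx:
  "path_to w es \<Longrightarrow> u \<in> E0
    \<Longrightarrow> (path w es :: ('v, 'e, 'k::field) ncpoly) * vtx u \<approx> (if u = w then path w es else 0)"
proof (induction es)
  case Nil then show ?case using vtx_vtx_rel[of w u] by (auto split: if_splits)
next
  case (Cons e es)
  then have "edge e * (path w es * vtx u)
      \<approx> edge e * (if u = w then path w es else (0 :: ('v, 'e, 'k) ncpoly))"
    by (intro cohn_eq_mult_left) auto
  then show ?case by (simp add: mult.assoc split: if_splits)
qed

lemma vtx_path:
  "path_to w es \<Longrightarrow> u \<in> E0 \<Longrightarrow> vtx u * path w es \<approx> (if u = path_src w es then path w es else 0)"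
proof (cases es)
  case Nil
  assume "path_to w es" "u \<in> E0"
  then show ?thesis using Nil vtx_vtx_rel[of u w] by (auto dest: path_to_E0)
next
  case (Cons e es')
  assume "path_to w es" "u \<in> E0"
  then have "vtx u * edge e * path w es' \<approx> (if u = s e then edge e else 0) * path w es'"
    using Cons by (intro cohn_eq_mult_right vtx_edge) auto
  then show ?thesis using Cons by (cases "u = s e") (simp_all add: mult.assoc)
qed

lemma ghost_path_vtx:
  "path_to w es \<Longrightarrow> u \<in> E0
    \<Longrightarrow> ghost_path w es * vtx u \<approx> (if u = path_src w es then ghost_path w es else 0)"
proof (cases es)
  case Nil
  assume "path_to w es" "u \<in> E0"
  then show ?thesis using Nil vtx_vtx_rel[of w u] by (auto dest: path_to_E0)
next
  case (Cons e es')
  assume "path_to w es" "u \<in> E0"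
  then have "ghost_path w es' * (ghost e * vtx u)
      \<approx> ghost_path w es' * (if u = s e then ghost e else 0)"
    using Cons by (intro cohn_eq_mult_left ghost_vtx) auto
  then show ?thesis using Cons by (cases "u = s e") (simp_all add: mult.assoc)
qed

lemma vtx_ghost_path:
  "path_to w es \<Longrightarrow> u \<in> E0
    \<Longrightarrow> vtx u * (ghost_path w es :: ('v, 'e, 'k::field) ncpoly)
      \<approx> (if u = w then ghost_path w es else 0)"
proof (induction es)
  case Nil then show ?case using vtx_vtx_rel[of u w] by (auto split: if_splits)
next
  case (Cons e es)
  then have "(vtx u * ghost_path w es) * ghost e
      \<approx> (if u = w then ghost_path w es else (0 :: ('v, 'e, 'k) ncpoly)) * ghost e"
    by (intro cohn_eq_mult_right) auto
  then show ?case by (simp add: mult.assoc split: if_splits)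
qed

lemma path_snoc:
  "path_to w es \<Longrightarrow> e \<in> E1 \<Longrightarrow> s e = w
    \<Longrightarrow> (path w es :: ('v, 'e, 'k::field) ncpoly) * edge e \<approx> path (r e) (es @ [e])
      \<and> path_to (r e) (es @ [e])"
proof (induction es)
  case Nil
  have "vtx w * edge e \<approx> (edge e :: ('v, 'e, 'k) ncpoly)" using vtx_edge[of w e] Nil by auto
  moreover have "edge e * vtx (r e) \<approx> (edge e :: ('v, 'e, 'k) ncpoly)"
    using edge_vtx_rel Nil by auto
  ultimately show ?case using Nil by (auto intro: cohn_eq_trans cohn_eq_sym)
next
  case (Cons x xs)
  then have "edge x * (path w xs * edge e)
      \<approx> edge x * (path (r e) (xs @ [e]) :: ('v, 'e, 'k) ncpoly)"
    by (intro cohn_eq_mult_left) auto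
  with Cons show ?case by (cases xs) (auto simp: mult.assoc)
qed

lemma ghost_path_snoc:
  "path_to w es \<Longrightarrow> e \<in> E1 \<Longrightarrow> s e = w
    \<Longrightarrow> ghost e * (ghost_path w es :: ('v, 'e, 'k::field) ncpoly) \<approx> ghost_path (r e) (es @ [e])
      \<and> path_to (r e) (es @ [e])"
proof (induction es)
  case Nil
  have "ghost e * vtx w \<approx> (ghost e :: ('v, 'e, 'k) ncpoly)" using ghost_vtx[of w e] Nil by auto
  moreover have "vtx (r e) * ghost e \<approx> (ghost e :: ('v, 'e, 'k) ncpoly)"
    using vtx_ghost_rel Nil by auto
  ultimately show ?case using Nil by (auto intro: cohn_eq_trans cohn_eq_sym)
next
  case (Cons x xs)
  then have "(ghost e * ghost_path w xs) * ghost x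
      \<approx> (ghost_path (r e) (xs @ [e]) :: ('v, 'e, 'k) ncpoly) * ghost x"
    by (intro cohn_eq_mult_right) auto
  with Cons show ?case by (cases xs) (auto simp: mult.assoc)
qed

lemma ghost_path_path: "path_to w g0 \<Longrightarrow> path_to w g \<Longrightarrow> length g0 \<le> length g \<Longrightarrow>
  (ghost_path w g0 :: ('v, 'e, 'k::field) ncpoly) * path w g \<approx>
    (if take (length g0) g = g0 \<and> path_src w (drop (length g0) g) = w
     then path w (drop (length g0) g) else 0)"
proof (induction g0 arbitrary: g)
  case Nil then show ?case using vtx_path[of w g w] by (auto dest: path_to_E0)
next
  case (Cons e es)
  then obtain f fs where g: "g = f # fs" by (cases g) auto
  have "ghost_path w (e # es) * path w g = ghost_path w es * (ghost e * edge f) * path w fs"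
    using g by (simp add: mult.assoc)
  also have "\<dots> \<approx> ghost_path w es * (if e = f then vtx (r e) else 0) * path w fs"
    using Cons.prems g by (intro cohn_eq_mult_right cohn_eq_mult_left ghost_edge_rel) auto
  finally have cancel: "ghost_path w (e # es) * path w g
      \<approx> ghost_path w es * (if e = f then vtx (r e) else 0) * path w fs" .
  show ?case
  proof (cases "e = f")
    case False then show ?thesis using cancel g by simp
  next
    case True
    have "ghost_path w es * vtx (r e) * path w fs
        \<approx> ghost_path w es * (path w fs :: ('v, 'e, 'k) ncpoly)"
      using Cons.prems g ghost_path_vtx[of w es "r e"] path_src_E0[of w es]
      by (intro cohn_eq_mult_right) auto
    also have "\<dots> \<approx> (if take (length es) fs = es \<and> path_src w (drop (length es) fs) = w
                   then path w (drop (length es) fs) else 0)"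
      by (rule Cons.IH) (use Cons.prems g in auto)
    finally show ?thesis using cancel True g by (auto intro: cohn_eq_trans)
  qed
qed

lemma q_edge: assumes b: "b \<in> Reg E0 E1 s" and e: "e \<in> E1" "s e = b"
  shows "q b * (edge e :: ('v, 'e, 'k::field) ncpoly) \<approx> 0"
proof -
  have fin: "finite (out_edges b)" using b by (rule finite_out_edges)
  have eS: "e \<in> out_edges b" using e by (simp add: out_edges_def)
  have "ee b * edge e = (\<Sum>f\<in>out_edges b. edge f * (ghost f * (edge e :: ('v, 'e, 'k) ncpoly)))"
    by (simp add: ee_def sum_distrib_right mult.assoc)
  also have "\<dots> \<approx> (\<Sum>f\<in>out_edges b.
      edge f * (if f = e then vtx (r f) else (0 :: ('v, 'e, 'k) ncpoly)))"
    using e by (intro cohn_eq_sum cohn_eq_mult_left)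
      (auto simp: out_edges_def intro: ghost_edge_same ghost_edge_diff)
  also have "\<dots> = edge e * vtx (r e)"
    using fin eS by (simp add: if_distrib[of "\<lambda>z. edge _ * z"] sum.delta' cong: if_cong)
  also have "\<dots> \<approx> edge e" using e(1) by (rule edge_vtx_rel)
  finally have ee_e: "ee b * edge e \<approx> (edge e :: ('v, 'e, 'k) ncpoly)" .
  have v_e: "vtx b * edge e \<approx> (edge e :: ('v, 'e, 'k) ncpoly)" using vtx_edge[of b e] e by auto
  have "q b * edge e = vtx b * edge e - ee b * (edge e :: ('v, 'e, 'k) ncpoly)"
    by (simp add: q_def left_diff_distrib)
  also have "\<dots> \<approx> edge e - edge e" using v_e ee_e by (rule cohn_eq_diff)
  finally show ?thesis by simp
qed

lemma ghost_q: assumes b: "b \<in> Reg E0 E1 s" and e: "e \<in> E1" "s e = b"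
  shows "(ghost e :: ('v, 'e, 'k::field) ncpoly) * q b \<approx> 0"
proof -
  have fin: "finite (out_edges b)" using b by (rule finite_out_edges)
  have eS: "e \<in> out_edges b" using e by (simp add: out_edges_def)
  have "ghost e * ee b = (\<Sum>f\<in>out_edges b. ((ghost e :: ('v, 'e, 'k) ncpoly) * edge f) * ghost f)"
    by (simp add: ee_def sum_distrib_left mult.assoc)
  also have "\<dots> \<approx> (\<Sum>f\<in>out_edges b.
      (if e = f then vtx (r e) else (0 :: ('v, 'e, 'k) ncpoly)) * ghost f)"
    using e by (intro cohn_eq_sum cohn_eq_mult_right)
      (auto simp: out_edges_def intro: ghost_edge_same ghost_edge_diff)
  also have "\<dots> = vtx (r e) * ghost e"
    using fin eS by (simp add: if_distrib[of "\<lambda>z. z * ghost _"] sum.delta cong: if_cong)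
  also have "\<dots> \<approx> ghost e" using e by (intro vtx_ghost_rel)
  finally have e_ee: "ghost e * ee b \<approx> (ghost e :: ('v, 'e, 'k) ncpoly)" .
  have e_v: "ghost e * vtx b \<approx> (ghost e :: ('v, 'e, 'k) ncpoly)" using ghost_vtx[of b e] e by auto
  have "ghost e * q b = ghost e * vtx b - (ghost e :: ('v, 'e, 'k) ncpoly) * ee b"
    by (simp add: q_def right_diff_distrib)
  also have "\<dots> \<approx> ghost e - ghost e" using e_v e_ee by (rule cohn_eq_diff)
  finally show ?thesis by simp
qed

lemma q_ee: assumes b: "b \<in> Reg E0 E1 s" shows "q b * (ee b :: ('v, 'e, 'k::field) ncpoly) \<approx> 0"
proof -
  have "q b * ee b = (\<Sum>f\<in>out_edges b. (q b * edge f) * (ghost f :: ('v, 'e, 'k) ncpoly))"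
    by (simp add: ee_def sum_distrib_left mult.assoc)
  also have "\<dots> \<approx> (\<Sum>f\<in>out_edges b. 0 * (ghost f :: ('v, 'e, 'k) ncpoly))"
    using b by (intro cohn_eq_sum cohn_eq_mult_right) (auto simp: out_edges_def intro: q_edge)
  finally show ?thesis by simp
qed

lemma vtx_ee: assumes b: "b \<in> E0" shows "vtx b * (ee b :: ('v, 'e, 'k::field) ncpoly) \<approx> ee b"
proof -
  have "vtx b * ee b = (\<Sum>f\<in>out_edges b. (vtx b * edge f) * (ghost f :: ('v, 'e, 'k) ncpoly))"
    by (simp add: ee_def sum_distrib_left mult.assoc)
  also have "\<dots> \<approx> (\<Sum>f\<in>out_edges b. edge f * (ghost f :: ('v, 'e, 'k) ncpoly))"
    using b vtx_edge_rel by (intro cohn_eq_sum cohn_eq_mult_right) (auto simp: out_edges_def)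
  finally show ?thesis by (simp add: ee_def)
qed

lemma ee_vtx: assumes b: "b \<in> E0" shows "(ee b :: ('v, 'e, 'k::field) ncpoly) * vtx b \<approx> ee b"
proof -
  have "ee b * vtx b = (\<Sum>f\<in>out_edges b. edge f * (ghost f * (vtx b :: ('v, 'e, 'k) ncpoly)))"
    by (simp add: ee_def sum_distrib_right mult.assoc)
  also have "\<dots> \<approx> (\<Sum>f\<in>out_edges b. edge f * (ghost f :: ('v, 'e, 'k) ncpoly))"
    using b ghost_vtx_rel by (intro cohn_eq_sum cohn_eq_mult_left) (auto simp: out_edges_def)
  finally show ?thesis by (simp add: ee_def)
qed

lemma vtx_q: "b \<in> E0 \<Longrightarrow> vtx b * q b \<approx> (q b :: ('v, 'e, 'k::field) ncpoly)"
  unfolding q_def right_diff_distrib using vtx_vtx_rel[of b b] vtx_ee[of b]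
  by (auto intro: cohn_eq_diff)

lemma q_vtx: "b \<in> E0 \<Longrightarrow> q b * vtx b \<approx> (q b :: ('v, 'e, 'k::field) ncpoly)"
  unfolding q_def left_diff_distrib using vtx_vtx_rel[of b b] ee_vtx[of b]
  by (auto intro: cohn_eq_diff)

lemma q_q: assumes "b \<in> Reg E0 E1 s" shows "q b * q b \<approx> (q b :: ('v, 'e, 'k::field) ncpoly)"
proof -
  have b: "b \<in> E0" using assms by (simp add: Reg_def)
  have "q b * q b = q b * vtx b - q b * (ee b :: ('v, 'e, 'k) ncpoly)"
    by (simp add: q_def right_diff_distrib)
  also have "\<dots> \<approx> q b - 0" using q_vtx[OF b] q_ee[OF assms] by (rule cohn_eq_diff)
  finally show ?thesis by simp
qed

lemma q_path: assumes "b \<in> Reg E0 E1 s" "path_to w es" "es \<noteq> []" "path_src w es = b"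
  shows "q b * (path w es :: ('v, 'e, 'k::field) ncpoly) \<approx> 0"
proof -
  obtain e es' where es: "es = e # es'" using assms by (cases es) auto
  have "(q b * edge e) * path w es' \<approx> 0 * (path w es' :: ('v, 'e, 'k) ncpoly)"
    using assms es by (intro cohn_eq_mult_right q_edge) auto
  then show ?thesis using es by (simp add: mult.assoc)
qed

lemma ghost_path_q: assumes "b \<in> Reg E0 E1 s" "path_to w es" "es \<noteq> []" "path_src w es = b"
  shows "(ghost_path w es :: ('v, 'e, 'k::field) ncpoly) * q b \<approx> 0"
proof -
  obtain e es' where es: "es = e # es'" using assms by (cases es) auto
  have "ghost_path w es' * (ghost e * q b) \<approx> (ghost_path w es' :: ('v, 'e, 'k) ncpoly) * 0"
    using assms es by (intro cohn_eq_mult_left ghost_q) auto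
  then show ?thesis using es by (simp add: mult.assoc)
qed

section \<open>Monomials span the Cohn path algebra\<close>

text \<open>A monomial \<open>Monomial w g n\<close> stands for \<open>g n\<^sup>*\<close>, where \<open>g\<close> and \<open>n\<close> are paths
  ending at the same vertex \<open>w\<close>.\<close>

datatype ('a, 'b) monomial = Monomial (mvtx: 'a) (mpath: "'b list") (mghost: "'b list")


definition mon :: "('v, 'e) monomial \<Rightarrow> ('v, 'e, 'k::field) ncpoly" where
  "mon t = path (mvtx t) (mpath t) * ghost_path (mvtx t) (mghost t)"

definition valid_mon :: "('v, 'e) monomial \<Rightarrow> bool" where
  "valid_mon t \<longleftrightarrow> path_to (mvtx t) (mpath t) \<and> path_to (mvtx t) (mghost t)"

lemma mon_Monomial [simp]: "mon (Monomial w g n) = path w g * ghost_path w n"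
  by (simp add: mon_def)

lemma valid_mon_Monomial [simp]: "valid_mon (Monomial w g n) \<longleftrightarrow> path_to w g \<and> path_to w n"
  by (simp add: valid_mon_def)

lemma in_FA_mon [intro, simp]: "valid_mon t \<Longrightarrow> in_FA (mon t)"
  by (auto simp: mon_def valid_mon_def)

lemma vtx_mon:
  assumes "valid_mon (Monomial w g n)" "u \<in> E0"
  shows "vtx u * mon (Monomial w g n) \<approx> (if u = path_src w g then mon (Monomial w g n) else 0)"
proof -
  have "(vtx u * path w g) * ghost_path w n
      \<approx> (if u = path_src w g then path w g else 0) * ghost_path w n"
    using assms by (intro cohn_eq_mult_right vtx_path) auto
  then show ?thesis by (cases "u = path_src w g") (simp_all add: mult.assoc)
qed

lemma edge_mon:
  assumes "valid_mon (Monomial w g n)" "e \<in> E1"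
  shows "edge e * mon (Monomial w g n)
    \<approx> (if r e = path_src w g then mon (Monomial w (e # g) n) else 0)"
proof (cases "r e = path_src w g")
  case True then show ?thesis by (simp add: mult.assoc)
next
  case False
  have "edge e * (path w g * ghost_path w n) \<approx> (edge e * vtx (r e)) * (path w g * ghost_path w n)"
    using assms by (intro cohn_eq_mult_right cohn_eq_sym[OF edge_vtx_rel]) auto
  also have "\<dots> = edge e * (vtx (r e) * mon (Monomial w g n))" by (simp add: mult.assoc)
  also have "\<dots> \<approx> edge e * 0"
    using assms False vtx_mon[of w g n "r e"] by (intro cohn_eq_mult_left) auto
  finally show ?thesis using False by simp
qed

lemma ghost_mon_Cons:
  assumes "valid_mon (Monomial w (f # g) n)" "e \<in> E1"
  shows "ghost e * mon (Monomial w (f # g) n) \<approx> (if e = f then mon (Monomial w g n) else 0)"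
proof -
  have "(ghost e * edge f) * (path w g * ghost_path w n)
      \<approx> (if e = f then vtx (r e) else 0) * (path w g * ghost_path w n)"
    using assms by (intro cohn_eq_mult_right ghost_edge_rel) auto
  moreover have "vtx (r f) * mon (Monomial w g n) \<approx> mon (Monomial w g n)"
    using assms vtx_mon[of w g n "r f"] path_src_E0[of w g] by auto
  ultimately show ?thesis by (cases "e = f") (auto simp: mult.assoc intro: cohn_eq_trans)
qed

lemma ghost_mon_Nil:
  assumes "valid_mon (Monomial w [] n)" "e \<in> E1"
  shows "ghost e * mon (Monomial w [] n)
    \<approx> (if s e = w then mon (Monomial (r e) [] (n @ [e])) else 0)"
proof -
  have w: "w \<in> E0" using assms by auto
  have src: "(ghost e * vtx w) * ghost_path w n \<approx> (if w = s e then ghost e else 0) * ghost_path w n"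
    using assms by (intro cohn_eq_mult_right ghost_vtx) auto
  show ?thesis
  proof (cases "s e = w")
    case False then show ?thesis using src by (simp add: mult.assoc)
  next
    case True
    have snoc: "ghost e * ghost_path w n \<approx> ghost_path (r e) (n @ [e])" "path_to (r e) (n @ [e])"
      using assms True ghost_path_snoc[of w n e] by auto
    have range: "vtx (r e) * ghost_path (r e) (n @ [e]) \<approx> ghost_path (r e) (n @ [e])"
      using vtx_ghost_path[of "r e" "n @ [e]" "r e"] snoc assms by auto
    have "ghost e * mon (Monomial w [] n) \<approx> ghost e * ghost_path w n"
      using src True by (simp add: mult.assoc)
    also have "\<dots> \<approx> ghost_path (r e) (n @ [e])" by (rule snoc)
    also have "\<dots> \<approx> mon (Monomial (r e) [] (n @ [e]))" using cohn_eq_sym[OF range] by simp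
    finally show ?thesis using True by simp
  qed
qed

definition lin_comb ::
    "('v, 'e) monomial set \<Rightarrow> (('v, 'e) monomial \<Rightarrow> 'k) \<Rightarrow> ('v, 'e, 'k::field) ncpoly" where
  "lin_comb T c = (\<Sum>t\<in>T. smult (c t) (mon t))"

lemma in_FA_lin_comb: "\<forall>t\<in>T. valid_mon t \<Longrightarrow> in_FA (lin_comb T c)"
  by (auto simp: lin_comb_def)

definition spanned :: "('v, 'e, 'k::field) ncpoly \<Rightarrow> bool" where
  "spanned x \<longleftrightarrow> (\<exists>T c. finite T \<and> (\<forall>t\<in>T. valid_mon t) \<and> x \<approx> lin_comb T c)"

lemma spanned_cohn_eq: "spanned x \<Longrightarrow> x \<approx> y \<Longrightarrow> spanned y"
  unfolding spanned_def by (meson cohn_eq_trans cohn_eq_sym)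

lemma spanned_zero: "spanned 0"
  unfolding spanned_def lin_comb_def by (intro exI[of _ "{}"]) auto

lemma spanned_mon: "valid_mon t \<Longrightarrow> spanned (mon t)"
  unfolding spanned_def lin_comb_def by (intro exI[of _ "{t}"] exI[of _ "\<lambda>_. 1"]) auto

lemma spanned_if_mon: "(P \<Longrightarrow> valid_mon t) \<Longrightarrow> y \<approx> (if P then mon t else 0) \<Longrightarrow> spanned y"
  by (cases P)
    (auto intro: spanned_cohn_eq[OF spanned_mon] spanned_cohn_eq[OF spanned_zero] cohn_eq_sym)

lemma spanned_smult: "spanned x \<Longrightarrow> spanned (smult k x)"
proof -
  assume "spanned x"
  then obtain T c where T: "finite T" "\<forall>t\<in>T. valid_mon t" "x \<approx> lin_comb T c"
    unfolding spanned_def by blast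
  have "smult k x \<approx> smult k (lin_comb T c)" using T(3) by (rule cohn_eq_smult)
  also have "\<dots> = lin_comb T (\<lambda>t. k * c t)" by (simp add: lin_comb_def smult_sum_right)
  finally show ?thesis using T unfolding spanned_def by blast
qed

lemma spanned_add: "spanned x \<Longrightarrow> spanned y \<Longrightarrow> spanned (x + y)"
proof -
  assume "spanned x" "spanned y"
  then obtain T c U d where T: "finite T" "\<forall>t\<in>T. valid_mon t" "x \<approx> lin_comb T c"
    and U: "finite U" "\<forall>t\<in>U. valid_mon t" "y \<approx> lin_comb U d"
    unfolding spanned_def by blast
  define c' where "c' t = (if t \<in> T then c t else 0)" for t
  define d' where "d' t = (if t \<in> U then d t else 0)" for t
  have "lin_comb T c = lin_comb (T \<union> U) c'" "lin_comb U d = lin_comb (T \<union> U) d'"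
    unfolding lin_comb_def c'_def d'_def using T(1) U(1)
    by (auto simp: if_distrib[of "\<lambda>k. smult k _"] sum.If_cases Int_absorb1 Int_absorb2)
  then have "x + y \<approx> lin_comb (T \<union> U) (\<lambda>t. c' t + d' t)"
    using T(3) U(3) by (auto simp: lin_comb_def smult_add_left sum.distrib dest: cohn_eq_add)
  with T U show ?thesis unfolding spanned_def by blast
qed

lemma spanned_sum: "(\<And>a. a \<in> S \<Longrightarrow> spanned (f a)) \<Longrightarrow> spanned (sum f S)"
  by (induction S rule: infinite_finite_induct) (auto intro: spanned_zero spanned_add)

lemma spanned_gen_mon:
  assumes "x \<in> gens E0 E1" "valid_mon t"
  shows "spanned (gen_poly x * mon t)"
proof -
  obtain w g n where t: "t = Monomial w g n" by (cases t)
  from assms(1) consider (V) v where "x = Vx v" "v \<in> E0" | (E) e where "x = Ed e" "e \<in> E1"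
    | (G) e where "x = Gh e" "e \<in> E1" by (auto simp: gens_def)
  then show ?thesis
  proof cases
    case V
    then show ?thesis using vtx_mon[of w g n v] assms unfolding t by (intro spanned_if_mon) auto
  next
    case E
    then show ?thesis using edge_mon[of w g n e] assms unfolding t by (intro spanned_if_mon) auto
  next
    case G
    show ?thesis
    proof (cases g)
      case Nil
      then show ?thesis using ghost_mon_Nil[of w n e] ghost_path_snoc[of w n e] assms G
        unfolding t by (intro spanned_if_mon) auto
    next
      case (Cons f g')
      then show ?thesis using ghost_mon_Cons[of w f g' n e] assms G
        unfolding t by (intro spanned_if_mon) auto
    qed
  qed
qed

lemma spanned_gen_mult: "x \<in> gens E0 E1 \<Longrightarrow> spanned y \<Longrightarrow> spanned (gen_poly x * y)"
proof -
  assume x: "x \<in> gens E0 E1" and "spanned y"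
  then obtain T c where T: "finite T" "\<forall>t\<in>T. valid_mon t" "y \<approx> lin_comb T c"
    unfolding spanned_def by blast
  have "spanned (gen_poly x * lin_comb T c)"
    unfolding lin_comb_def sum_distrib_left smult_mult_right
    using T(2) x by (intro spanned_sum spanned_smult spanned_gen_mon) auto
  then show ?thesis using T(3) x by (auto intro: spanned_cohn_eq cohn_eq_sym)
qed

lemma spanned_gen: "x \<in> gens E0 E1 \<Longrightarrow> spanned (gen_poly x :: ('v, 'e, 'k::field) ncpoly)"
proof -
  assume "x \<in> gens E0 E1"
  then consider (V) v where "x = Vx v" "v \<in> E0" | (E) e where "x = Ed e" "e \<in> E1"
    | (G) e where "x = Gh e" "e \<in> E1" by (auto simp: gens_def)
  then show ?thesis
  proof cases
    case V
    then have "mon (Monomial v [] []) \<approx> (vtx v :: ('v, 'e, 'k) ncpoly)"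
      using vtx_vtx_rel[of v v] by simp
    then show ?thesis using V spanned_cohn_eq[OF spanned_mon[of "Monomial v [] []"]] by simp
  next
    case E
    have "edge e * vtx (r e) * vtx (r e) \<approx> (edge e * vtx (r e) :: ('v, 'e, 'k) ncpoly)"
      using E edge_vtx_rel by (intro cohn_eq_mult_right) auto
    also have "\<dots> \<approx> edge e" using E edge_vtx_rel by auto
    finally have "mon (Monomial (r e) [e] []) \<approx> (edge e :: ('v, 'e, 'k) ncpoly)" by simp
    then show ?thesis using E spanned_cohn_eq[OF spanned_mon[of "Monomial (r e) [e] []"]] by simp
  next
    case G
    have "vtx (r e) * (vtx (r e) * ghost e) \<approx> (vtx (r e) * ghost e :: ('v, 'e, 'k) ncpoly)"
      using G vtx_ghost_rel by (intro cohn_eq_mult_left) auto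
    also have "\<dots> \<approx> ghost e" using G vtx_ghost_rel by auto
    finally have "mon (Monomial (r e) [] [e]) \<approx> (ghost e :: ('v, 'e, 'k) ncpoly)" by simp
    then show ?thesis using G spanned_cohn_eq[OF spanned_mon[of "Monomial (r e) [] [e]"]] by simp
  qed
qed

lemma spanned_word:
  "w \<noteq> [] \<Longrightarrow> set w \<subseteq> gens E0 E1 \<Longrightarrow> spanned (word w :: ('v, 'e, 'k::field) ncpoly)"
proof (induction w)
  case (Cons a as)
  have a: "a \<in> gens E0 E1" using Cons.prems by simp
  show ?case
  proof (cases "as = []")
    case True
    have "(word [a] :: ('v, 'e, 'k) ncpoly) = gen_poly a"
      by (simp add: word_def gen_poly_def gen_def)
    then show ?thesis using True spanned_gen[OF a] by simp
  next
    case False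
    then show ?thesis
      using Cons spanned_gen_mult[OF a] by (simp add: word_Cons gen_poly_def[symmetric])
  qed
qed simp

lemma in_FA_spanned: "in_FA x \<Longrightarrow> spanned x"
proof -
  assume "in_FA x"
  then have fin: "finite {w. coeffs x w \<noteq> 0}"
    and words: "\<And>w. coeffs x w \<noteq> 0 \<Longrightarrow> w \<noteq> [] \<and> set w \<subseteq> gens E0 E1"
    by (auto simp: in_FA_def FA_def)
  have "spanned (\<Sum>w\<in>{w. coeffs x w \<noteq> 0}. smult (coeffs x w) (word w))"
    using words by (intro spanned_sum spanned_smult spanned_word) auto
  then show "spanned x"
    using ncpoly_word_expansion[OF fin] by simp
qed

definition ghost_src :: "('v, 'e) monomial \<Rightarrow> 'v" where
  "ghost_src t = path_src (mvtx t) (mghost t)"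

definition absorb :: "'e \<Rightarrow> ('v, 'e) monomial \<Rightarrow> ('v, 'e) monomial" where
  "absorb e t = (if mghost t = [] then Monomial (r e) (mpath t @ [e]) []
                 else Monomial (mvtx t) (mpath t) (tl (mghost t)))"

lemma length_mghost_absorb [simp]: "length (mghost (absorb e t)) = length (mghost t) - 1"
  by (simp add: absorb_def)

lemma ghost_src_in_E0: "valid_mon t \<Longrightarrow> ghost_src t \<in> E0"
  by (simp add: ghost_src_def valid_mon_def path_src_E0)

lemma valid_absorb:
  assumes "valid_mon t" "e \<in> out_edges (ghost_src t)" "mghost t = [] \<or> hd (mghost t) = e"
  shows "valid_mon (absorb e t)"
proof (cases "mghost t")
  case Nil
  then have "path_to (r e) (mpath t @ [e])"
    using assms(1,2) path_snoc[of "mvtx t" "mpath t" e]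
    by (auto simp: valid_mon_def ghost_src_def out_edges_def)
  then show ?thesis using Nil assms(2) by (auto simp: absorb_def dest: out_edgesD)
next
  case Cons
  then show ?thesis using assms(1) by (auto simp: absorb_def valid_mon_def)
qed

lemma mon_absorb_ghost: "mghost t \<noteq> [] \<Longrightarrow> mon (absorb e t) * ghost (hd (mghost t)) = mon t"
  by (cases t; cases "mghost t") (auto simp: absorb_def mult.assoc)

lemma mon_mult_vtx:
  assumes "valid_mon t" "b \<in> E0"
  shows "mon t * vtx b \<approx> (if ghost_src t = b then mon t else 0)"
proof -
  obtain w g n where t: "t = Monomial w g n" by (cases t)
  have "path w g * (ghost_path w n * vtx b)
      \<approx> path w g * (if b = path_src w n then ghost_path w n else 0)"
    using assms t by (intro cohn_eq_mult_left ghost_path_vtx) auto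
  then show ?thesis using t by (cases "b = path_src w n") (auto simp: ghost_src_def mult.assoc)
qed

lemma mon_mult_edge:
  assumes "valid_mon t" "e \<in> out_edges (ghost_src t)"
  shows "mon t * edge e \<approx> (if mghost t = [] \<or> hd (mghost t) = e then mon (absorb e t) else 0)"
proof -
  obtain w g n where t: "t = Monomial w g n" by (cases t)
  have e: "e \<in> E1" "s e = path_src w n" and g: "path_to w g" and n: "path_to w n"
    using assms t by (auto simp: ghost_src_def out_edges_def)
  show ?thesis
  proof (cases n)
    case Nil
    have w: "w \<in> E0" using g by (rule path_to_E0)
    have snoc: "path w g * edge e \<approx> path (r e) (g @ [e])" "path_to (r e) (g @ [e])"
      using path_snoc[of w g e] g e Nil by auto
    have "path w g * vtx w * edge e = path w g * (vtx w * edge e)" by (simp add: mult.assoc)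
    also have "\<dots> \<approx> path w g * edge e"
      using vtx_edge[of w e] e g w Nil by (intro cohn_eq_mult_left) auto
    also have "\<dots> \<approx> path (r e) (g @ [e])" by (rule snoc(1))
    also have "\<dots> \<approx> path (r e) (g @ [e]) * vtx (r e)"
      using path_vtx[of "r e" "g @ [e]" "r e"] snoc e by (auto intro: cohn_eq_sym)
    finally show ?thesis using t Nil by (simp add: absorb_def)
  next
    case (Cons x n')
    have x: "x \<in> E1" "r x = path_src w n'" "path_to w n'" using n Cons by auto
    have "path w g * ghost_path w n' * (ghost x * edge e)
        \<approx> path w g * ghost_path w n' * (if x = e then vtx (r x) else 0)"
      using x e by (intro cohn_eq_mult_left ghost_edge_rel) (auto simp: g)
    moreover have "path w g * (ghost_path w n' * vtx (r x)) \<approx> path w g * ghost_path w n'"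
      using x g ghost_path_vtx[of w n' "r x"] path_src_E0[of w n'] by (intro cohn_eq_mult_left) auto
    ultimately show ?thesis
      using t Cons by (cases "x = e") (auto simp: absorb_def mult.assoc intro: cohn_eq_trans)
  qed
qed

lemma lin_comb_mult_vtx:
  assumes "finite T" "\<forall>t\<in>T. valid_mon t" "b \<in> E0"
  shows "lin_comb T c * vtx b \<approx> lin_comb {t\<in>T. ghost_src t = b} c"
proof -
  have "lin_comb T c * vtx b = (\<Sum>t\<in>T. smult (c t) (mon t * vtx b))"
    by (simp add: lin_comb_def sum_distrib_right)
  also have "\<dots> \<approx> (\<Sum>t\<in>T. if ghost_src t = b then smult (c t) (mon t) else 0)"
  proof (intro cohn_eq_sum)
    fix t assume "t \<in> T"
    then have "mon t * vtx b \<approx> (if ghost_src t = b then mon t else 0)"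
      using assms by (intro mon_mult_vtx) auto
    then show "smult (c t) (mon t * vtx b) \<approx> (if ghost_src t = b then smult (c t) (mon t) else 0)"
      by (cases "ghost_src t = b") (auto dest: cohn_eq_smult[of _ _ "c t"])
  qed
  also have "\<dots> = lin_comb {t\<in>T. ghost_src t = b} c"
    using assms(1) by (simp add: lin_comb_def sum.inter_filter)
  finally show ?thesis .
qed

lemma lin_comb_mult_edge:
  assumes "finite T" "\<forall>t\<in>T. valid_mon t \<and> ghost_src t = b" "e \<in> out_edges b"
  shows "lin_comb T c * edge e
    \<approx> (\<Sum>t\<in>{t\<in>T. mghost t = [] \<or> hd (mghost t) = e}. smult (c t) (mon (absorb e t)))"
proof -
  have "lin_comb T c * edge e = (\<Sum>t\<in>T. smult (c t) (mon t * edge e))"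
    by (simp add: lin_comb_def sum_distrib_right)
  also have "\<dots> \<approx> (\<Sum>t\<in>T. if mghost t = [] \<or> hd (mghost t) = e
                      then smult (c t) (mon (absorb e t)) else 0)"
  proof (intro cohn_eq_sum)
    fix t assume "t \<in> T"
    then have "mon t * edge e \<approx> (if mghost t = [] \<or> hd (mghost t) = e then mon (absorb e t) else 0)"
      using assms by (intro mon_mult_edge) auto
    then show "smult (c t) (mon t * edge e)
        \<approx> (if mghost t = [] \<or> hd (mghost t) = e then smult (c t) (mon (absorb e t)) else 0)"
      by (cases "mghost t = [] \<or> hd (mghost t) = e") (auto dest: cohn_eq_smult[of _ _ "c t"])
  qed
  also have "\<dots> = (\<Sum>t\<in>{t\<in>T. mghost t = [] \<or> hd (mghost t) = e}. smult (c t) (mon (absorb e t)))"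
    using assms(1) by (simp add: sum.inter_filter)
  finally show ?thesis .
qed

lemma lin_comb_ghost_expansion:
  assumes "finite T" "\<forall>t\<in>T. valid_mon t \<and> ghost_src t = b \<and> mghost t \<noteq> []"
  shows "lin_comb T c \<approx> (\<Sum>e\<in>(\<lambda>t. hd (mghost t)) ` T. (lin_comb T c * edge e) * ghost e)"
proof -
  define T\<^sub>e where "T\<^sub>e e = {t\<in>T. hd (mghost t) = e}" for e
  have out: "hd (mghost t) \<in> out_edges b" if "t \<in> T" for t
    using assms that by (cases "mghost t") (auto simp: ghost_src_def valid_mon_def out_edges_def)
  have "lin_comb T c = (\<Sum>e\<in>(\<lambda>t. hd (mghost t)) ` T. \<Sum>t\<in>T\<^sub>e e. smult (c t) (mon t))"
    unfolding lin_comb_def T\<^sub>e_def using assms(1) by (rule sum.image_gen)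
  also have "\<dots> = (\<Sum>e\<in>(\<lambda>t. hd (mghost t)) ` T. (\<Sum>t\<in>T\<^sub>e e. smult (c t) (mon (absorb e t))) * ghost e)"
    using assms by (auto simp: T\<^sub>e_def sum_distrib_right intro!: sum.cong) (metis mon_absorb_ghost)
  also have "\<dots> \<approx> (\<Sum>e\<in>(\<lambda>t. hd (mghost t)) ` T. (lin_comb T c * edge e) * ghost e)"
  proof (intro cohn_eq_sum)
    fix e assume "e \<in> (\<lambda>t. hd (mghost t)) ` T"
    then have e: "e \<in> out_edges b" using out by blast
    moreover have "{t\<in>T. mghost t = [] \<or> hd (mghost t) = e} = T\<^sub>e e"
      using assms by (auto simp: T\<^sub>e_def)
    ultimately have "lin_comb T c * edge e \<approx> (\<Sum>t\<in>T\<^sub>e e. smult (c t) (mon (absorb e t)))"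
      using lin_comb_mult_edge[OF assms(1), of b e c] assms(2) by simp
    moreover have "in_FA (ghost e)" using e by (auto dest: out_edgesD)
    ultimately show "(\<Sum>t\<in>T\<^sub>e e. smult (c t) (mon (absorb e t))) * ghost e
        \<approx> lin_comb T c * edge e * ghost e"
      by (blast intro: cohn_eq_mult_right cohn_eq_sym)
  qed
  finally show ?thesis .
qed

lemma ghostless_mon:
  assumes "valid_mon t" "ghost_src t = b" "mghost t = []"
  shows "t = Monomial b (mpath t) []" "path_to b (mpath t)" "mon t = path b (mpath t) * vtx b"
  using assms by (cases t; simp add: ghost_src_def valid_mon_def)+

lemma inj_on_ghostless_paths:
  assumes "\<forall>t\<in>T. valid_mon t \<and> ghost_src t = b \<and> mghost t = []"
  shows "inj_on (\<lambda>t. mpath t @ xs) T"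
proof (rule inj_onI)
  fix t t' assume tt': "t \<in> T" "t' \<in> T" and eq: "mpath t @ xs = mpath t' @ xs"
  have "t = Monomial b (mpath t) []" "t' = Monomial b (mpath t') []"
    using assms tt' by (auto intro: ghostless_mon(1))
  then show "t = t'" using eq by simp
qed

section \<open>Closed paths\<close>

fun linked :: "'e list \<Rightarrow> bool" where
  "linked [] = True"
| "linked [e] = True"
| "linked (e # f # es) \<longleftrightarrow> r e = s f \<and> linked (f # es)"

lemma linked_Cons: "linked (e # es) \<longleftrightarrow> linked es \<and> (es \<noteq> [] \<longrightarrow> r e = s (hd es))"
  by (cases es) auto

lemma linked_append:
  "linked (xs @ ys) \<longleftrightarrow> linked xs \<and> linked ys \<and> (xs \<noteq> [] \<longrightarrow> ys \<noteq> [] \<longrightarrow> r (last xs) = s (hd ys))"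
  by (induction xs) (auto simp: linked_Cons)

lemma linked_nth: "linked es \<Longrightarrow> Suc i < length es \<Longrightarrow> r (es ! i) = s (es ! Suc i)"
proof (induction es arbitrary: i rule: linked.induct)
  case (3 e f es) then show ?case by (cases i) auto
qed auto

lemma path_to_iff:
  "path_to w es \<longleftrightarrow> w \<in> E0 \<and> set es \<subseteq> E1 \<and> linked es \<and> (es \<noteq> [] \<longrightarrow> r (last es) = w)"
  by (induction es) (auto simp: linked_Cons path_src_def)

lemma path_to_drop: "path_to w g \<Longrightarrow> path_to w (drop n g)"
proof (induction g arbitrary: n)
  case (Cons e g) then show ?case by (cases n) auto
qed auto

definition closed_path :: "'v \<Rightarrow> 'e list \<Rightarrow> bool" where
  "closed_path w d \<longleftrightarrow> d \<noteq> [] \<and> path_to w d \<and> path_src w d = w"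

definition unique_out :: "'v \<Rightarrow> bool" where
  "unique_out v \<longleftrightarrow> v \<in> X \<and> (\<exists>f. out_edges v = {f})"

lemma unique_out_edge: "unique_out v \<Longrightarrow> e \<in> out_edges v \<Longrightarrow> e' \<in> out_edges v \<Longrightarrow> e = e'"
  unfolding unique_out_def by auto

lemma distinct_closed_path_is_cycle:
  assumes "closed_path w d" "distinct (map s d)"
  shows "is_cycle E1 r s d"
proof -
  have d: "d \<noteq> []" "set d \<subseteq> E1" "linked d" "r (last d) = w" "s (hd d) = w"
    using assms(1) by (auto simp: closed_path_def path_to_iff path_src_def)
  show ?thesis
    unfolding is_cycle_def
    using d linked_nth[OF d(3)] assms(2) by (auto simp: inj_on_def distinct_conv_nth)
qed

lemma closed_path_leaves_unique_out:
  assumes condL: "rel_condL E0 E1 r s X" and "closed_path w d"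
  shows "\<exists>e\<in>set d. \<not> unique_out (s e)"
  using assms(2)
proof (induction "length d" arbitrary: d rule: less_induct)
  case less
  show ?case
  proof (rule ccontr)
    assume "\<not> ?case"
    then have uo: "\<forall>e\<in>set d. unique_out (s e)" by blast
    have d: "set d \<subseteq> E1" "linked d" "r (last d) = w" "s (hd d) = w" "w \<in> E0"
      using less.prems by (auto simp: closed_path_def path_to_iff path_src_def)
    show False
    proof (cases "distinct d")
      case True
      have "inj_on s (set d)"
        using d(1) uo by (auto simp: inj_on_def) (metis unique_out_edge out_edgesI subsetD)
      then have cyc: "is_cycle E1 r s d"
        using True less.prems by (intro distinct_closed_path_is_cycle) (auto simp: distinct_map)
      have "\<forall>i<length d. s (d ! i) \<notin> Reg E0 E1 s - X"
        using uo by (auto simp: unique_out_def)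
      then obtain e i where "e \<in> E1" "i < length d" "s e = s (d ! i)" "e \<noteq> d ! i"
        using condL cyc unfolding rel_condL_def has_exit_def by blast
      moreover have "d ! i \<in> E1" "unique_out (s (d ! i))" using calculation(2) d(1) uo by auto
      ultimately show False
        using unique_out_edge[of "s (d ! i)" e "d ! i"] by (auto simp: out_edges_def)
    next
      case False
      then obtain xs y ys zs where split: "d = xs @ [y] @ ys @ [y] @ zs"
        using not_distinct_decomp by blast
      define d' where "d' = xs @ [y] @ zs"
      have "linked d'" using d(2) unfolding split d'_def by (auto simp: linked_append linked_Cons)
      moreover have "r (last d') = w" using d(3) unfolding split d'_def by (cases zs) auto
      moreover have "s (hd d') = w" using d(4) unfolding split d'_def by (cases xs) auto
      ultimately have "closed_path w d'"
        using d(1,5) split by (auto simp: closed_path_def path_to_iff path_src_def d'_def)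
      moreover have "length d' < length d" using split d'_def by simp
      ultimately show False using less.hyps uo split d'_def by fastforce
    qed
  qed
qed

lemma closed_path_hd: "closed_path w d \<Longrightarrow> hd d \<in> out_edges w"
  by (cases d) (auto simp: closed_path_def out_edges_def)

definition unique_prefix :: "'e list \<Rightarrow> nat" where
  "unique_prefix d = length (takeWhile (\<lambda>e. unique_out (s e)) d)"

lemma unique_prefix_rotate1:
  assumes "d \<noteq> []" "unique_out (s (hd d))" "\<exists>e\<in>set d. \<not> unique_out (s e)"
  shows "unique_prefix (rotate1 d) < unique_prefix d"
proof -
  obtain e d' where d: "d = e # d'" using assms(1) by (cases d) auto
  then have "\<exists>x\<in>set d'. \<not> unique_out (s x)" using assms by auto
  then have "takeWhile (\<lambda>x. unique_out (s x)) (d' @ [e]) = takeWhile (\<lambda>x. unique_out (s x)) d'"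
    by (meson takeWhile_append1)
  then show ?thesis using d assms(2) by (simp add: unique_prefix_def)
qed

lemma exists_proper_branch:
  assumes "finite D" "D \<noteq> {}" "\<forall>d\<in>D. hd d \<in> out_edges w" "w \<in> E0"
    and "\<not> unique_out w" "w \<notin> Reg E0 E1 s - X"
  shows "\<exists>f\<in>out_edges w. card {d\<in>D. hd d = f} < card D"
proof (cases "out_edges w \<subseteq> hd ` D")
  case False
  then obtain f where f: "f \<in> out_edges w" and empty: "{d\<in>D. hd d = f} = {}" by auto
  have "card D > 0" using assms(1,2) by (simp add: card_gt_0_iff)
  then have "card {d\<in>D. hd d = f} < card D" by (simp only: empty card.empty)
  then show ?thesis using f by blast
next
  case True
  obtain d where d: "d \<in> D" using assms(2) by blast
  have "finite (out_edges w)" using assms(1) True by (rule finite_surj)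
  moreover have "out_edges w \<noteq> {}" using assms(3) d by blast
  ultimately have "w \<in> X" using assms(4,6) by (auto simp: Reg_def out_edges_def)
  then obtain f where f: "f \<in> out_edges w" "f \<noteq> hd d"
    using assms(3,5) d by (auto simp: unique_out_def)
  then obtain d' where "d' \<in> D" "hd d' = f" using True by auto
  then have "{x\<in>D. hd x = hd d} \<subset> D" using f by auto
  then show ?thesis using assms(1,3) d by (intro bexI[of _ "hd d"] psubset_card_mono) auto
qed
end

section \<open>Triviality of the kernel\<close>

locale cohn_kernel = cohn_graph E0 E1 r s X
  for E0 :: "'v set" and E1 :: "'e set" and r s :: "'e \<Rightarrow> 'v" and X :: "'v set" +
  fixes K :: "('v, 'e, 'k::field) ncpoly \<Rightarrow> bool"
  assumes K_in_FA: "K x \<Longrightarrow> in_FA x"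
    and K_mult_left: "in_FA z \<Longrightarrow> K x \<Longrightarrow> K (z * x)"
    and K_mult_right: "in_FA z \<Longrightarrow> K x \<Longrightarrow> K (x * z)"
    and K_cohn_eq: "K x \<Longrightarrow> x \<approx> y \<Longrightarrow> K y"
    and vtx_notin_K: "u \<in> E0 \<Longrightarrow> u \<notin> Reg E0 E1 s - X \<Longrightarrow> \<not> K (vtx u)"
    and q_notin_K: "u \<in> Reg E0 E1 s - X \<Longrightarrow> \<not> K (q u)"
    and condL: "rel_condL E0 E1 r s X"
begin

lemma smult_q_notin_K:
  assumes "k \<noteq> 0" "u \<in> Reg E0 E1 s - X"
  shows "\<not> K (smult k (q u))"
proof
  assume "K (smult k (q u))"
  then have "K (smult (1 / k) (q u) * smult k (q u))"
    using assms Reg_in_E0[of u] by (intro K_mult_left) auto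
  then have "K (q u * q u)" using assms by simp
  then have "K (q u)" using q_q assms by (blast intro: K_cohn_eq)
  then show False using q_notin_K assms by blast
qed

lemma smult_vtx_notin_K:
  assumes "k \<noteq> 0" "u \<in> E0"
  shows "\<not> K (smult k (vtx u))"
proof
  assume K: "K (smult k (vtx u))"
  show False
  proof (cases "u \<in> Reg E0 E1 s - X")
    case True
    have "K (q u * smult k (vtx u))" using K assms by (intro K_mult_left) auto
    moreover have "q u * smult k (vtx u) \<approx> smult k (q u)" using q_vtx[OF assms(2)] by auto
    ultimately show False using smult_q_notin_K assms True by (blast intro: K_cohn_eq)
  next
    case False
    have "K (smult (1 / k) (vtx u) * smult k (vtx u))" using K assms by (intro K_mult_left) auto
    then have "K (vtx u * vtx u)" using assms by simp
    then have "K (vtx u)" using vtx_vtx_rel[OF assms(2) assms(2)] by (auto intro: K_cohn_eq)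
    then show False using vtx_notin_K assms False by blast
  qed
qed

text \<open>Conjugating a relation \<open>k w + \<Sum> c\<^sub>d d\<close> by an edge \<open>f\<close> out of \<open>w\<close>, i.e. multiplying by
  \<open>f\<^sup>*\<close> on the left and by \<open>f\<close> on the right, keeps \<open>k\<close> and rotates the closed paths beginning
  with \<open>f\<close> (see \<open>loop_rel_rotate\<close>).\<close>

definition loop_rel :: "'v \<Rightarrow> 'k \<Rightarrow> 'e list set \<Rightarrow> ('e list \<Rightarrow> 'k) \<Rightarrow> bool" where
  "loop_rel w k D c \<longleftrightarrow> finite D \<and> w \<in> E0 \<and> k \<noteq> 0 \<and> (\<forall>d\<in>D. closed_path w d)
     \<and> K (smult k (vtx w) + (\<Sum>d\<in>D. smult (c d) (path w d)))"

lemma q_mult_loop_comb: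
  assumes "w \<in> Reg E0 E1 s" "\<forall>d\<in>D. closed_path w d" "in_FA T"
  shows "q w * (smult k (vtx w * T) + (\<Sum>d\<in>D. smult (c d) (path w d * T))) \<approx> smult k (q w * T)"
proof -
  have w: "w \<in> E0" using assms(1) by (rule Reg_in_E0)
  have "q w * (smult k (vtx w * T) + (\<Sum>d\<in>D. smult (c d) (path w d * T)))
      = smult k ((q w * vtx w) * T) + (\<Sum>d\<in>D. smult (c d) ((q w * path w d) * T))"
    by (simp add: distrib_left sum_distrib_left mult.assoc)
  also have "\<dots> \<approx> smult k (q w * T) + (\<Sum>d\<in>D. smult (c d) (0 * T))"
    using assms q_vtx[OF w]
    by (intro cohn_eq_add cohn_eq_smult cohn_eq_sum cohn_eq_mult_right q_path)
      (auto simp: closed_path_def)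
  finally show ?thesis by simp
qed

lemma loop_rel_not_Y: "loop_rel w k D c \<Longrightarrow> w \<notin> Reg E0 E1 s - X"
proof
  assume rel: "loop_rel w k D c" and Y: "w \<in> Reg E0 E1 s - X"
  then have w: "w \<in> E0" and k: "k \<noteq> 0" and closed: "\<forall>d\<in>D. closed_path w d"
    and K: "K (smult k (vtx w) + (\<Sum>d\<in>D. smult (c d) (path w d)))"
    by (auto simp: loop_rel_def)
  have "smult k (vtx w * vtx w) + (\<Sum>d\<in>D. smult (c d) (path w d * vtx w))
      \<approx> smult k (vtx w) + (\<Sum>d\<in>D. smult (c d) (path w d))"
    using vtx_vtx_rel[OF w w] path_vtx[of w _ w] closed w
    by (intro cohn_eq_add cohn_eq_smult cohn_eq_sum) (auto simp: closed_path_def)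
  then have "K (smult k (vtx w * vtx w) + (\<Sum>d\<in>D. smult (c d) (path w d * vtx w)))"
    using K by (blast intro: K_cohn_eq cohn_eq_sym)
  then have "K (q w * (smult k (vtx w * vtx w) + (\<Sum>d\<in>D. smult (c d) (path w d * vtx w))))"
    using w by (intro K_mult_left) auto
  then have "K (smult k (q w * vtx w))"
    using q_mult_loop_comb[of w D "vtx w" k c] Y closed w by (auto intro: K_cohn_eq)
  then have "K (smult k (q w))"
    using q_vtx[OF w] by (auto intro: K_cohn_eq)
  then show False using smult_q_notin_K k Y by blast
qed

lemma ghost_closed_path_edge:
  assumes "closed_path w d" "f \<in> out_edges w"
  shows "ghost f * path w d * edge f \<approx> (if hd d = f then path (r f) (rotate1 d) else 0)"
    and "hd d = f \<Longrightarrow> closed_path (r f) (rotate1 d)"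
proof -
  obtain e d' where d: "d = e # d'" using assms by (cases d) (auto simp: closed_path_def)
  have e: "e \<in> E1" "r e = path_src w d'" "path_to w d'" "s e = w" and f: "f \<in> E1" "s f = w"
    using assms d by (auto simp: closed_path_def out_edgesD)
  have snoc: "path w d' * edge f \<approx> path (r f) (d' @ [f])" "path_to (r f) (d' @ [f])"
    using path_snoc[of w d' f] e f by auto
  have src: "path_src (r f) (d' @ [f]) = r f" if "e = f" using that e by (cases d') auto
  show "hd d = f \<Longrightarrow> closed_path (r f) (rotate1 d)"
    using snoc src d by (auto simp: closed_path_def)
  have "ghost f * path w d * edge f = (ghost f * edge e) * (path w d' * edge f)"
    using d by (simp add: mult.assoc)
  also have "\<dots> \<approx> (if f = e then vtx (r f) else 0) * (path w d' * edge f)"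
    using e f ghost_edge_rel[of f e] by (intro cohn_eq_mult_right) auto
  also have "\<dots> \<approx> (if f = e then path (r f) (d' @ [f]) else 0)"
  proof (cases "f = e")
    case True
    have "vtx (r f) * (path w d' * edge f) \<approx> vtx (r f) * path (r f) (d' @ [f])"
      using snoc f by (intro cohn_eq_mult_left) auto
    also have "\<dots> \<approx> path (r f) (d' @ [f])"
      using vtx_path[of "r f" "d' @ [f]" "r f"] snoc src True f by auto
    finally show ?thesis using True by simp
  qed simp
  finally show "ghost f * path w d * edge f \<approx> (if hd d = f then path (r f) (rotate1 d) else 0)"
    using d by auto
qed

lemma loop_rel_rotate:
  assumes rel: "loop_rel w k D c" and f: "f \<in> out_edges w"
  shows "loop_rel (r f) k (rotate1 ` {d\<in>D. hd d = f}) (c \<circ> inv rotate1)"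
    and "card (rotate1 ` {d\<in>D. hd d = f}) = card {d\<in>D. hd d = f}"
proof -
  define Df where "Df = {d\<in>D. hd d = f}"
  have fin: "finite D" and k: "k \<noteq> 0" and w: "w \<in> E0" and closed: "\<forall>d\<in>D. closed_path w d"
    and K: "K (smult k (vtx w) + (\<Sum>d\<in>D. smult (c d) (path w d)))"
    using rel by (auto simp: loop_rel_def)
  have fE: "f \<in> E1" "s f = w" using f by (auto dest: out_edgesD)
  have inj: "inj_on rotate1 Df" using inj_rotate1 by (rule inj_on_subset) simp
  show "card (rotate1 ` {d\<in>D. hd d = f}) = card {d\<in>D. hd d = f}"
    using inj by (simp add: card_image Df_def)
  have "ghost f * (smult k (vtx w) + (\<Sum>d\<in>D. smult (c d) (path w d))) * edge f
      = smult k (ghost f * vtx w * edge f) + (\<Sum>d\<in>D. smult (c d) (ghost f * path w d * edge f))"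
    by (simp add: distrib_left distrib_right sum_distrib_left sum_distrib_right mult.assoc)
  also have "\<dots> \<approx> smult k (vtx (r f))
      + (\<Sum>d\<in>D. smult (c d) (if hd d = f then path (r f) (rotate1 d) else 0))"
  proof (intro cohn_eq_add cohn_eq_smult cohn_eq_sum)
    have "ghost f * vtx w * edge f \<approx> ghost f * edge f"
      using ghost_vtx[of w f] fE w by (intro cohn_eq_mult_right) auto
    also have "\<dots> \<approx> vtx (r f)" using ghost_edge_same fE by auto
    finally show "ghost f * vtx w * edge f \<approx> vtx (r f)" .
    show "ghost f * path w d * edge f \<approx> (if hd d = f then path (r f) (rotate1 d) else 0)"
      if "d \<in> D" for d
      using ghost_closed_path_edge(1) closed that f by blast
  qed
  also have "(\<Sum>d\<in>D. smult (c d) (if hd d = f then path (r f) (rotate1 d) else 0))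
      = (\<Sum>d\<in>rotate1 ` Df. smult ((c \<circ> inv rotate1) d) (path (r f) d))"
    using fin inj
    by (simp add: if_distrib[of "smult _"] sum.inter_filter[symmetric] sum.reindex Df_def
        inv_f_f[OF inj_rotate1] cong: if_cong)
  finally have conj: "ghost f * (smult k (vtx w) + (\<Sum>d\<in>D. smult (c d) (path w d))) * edge f
      \<approx> smult k (vtx (r f)) + (\<Sum>d\<in>rotate1 ` Df. smult ((c \<circ> inv rotate1) d) (path (r f) d))" .
  have "K (ghost f * (smult k (vtx w) + (\<Sum>d\<in>D. smult (c d) (path w d))) * edge f)"
    using K fE by (intro K_mult_left K_mult_right) auto
  then have "K (smult k (vtx (r f))
      + (\<Sum>d\<in>rotate1 ` Df. smult ((c \<circ> inv rotate1) d) (path (r f) d)))"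
    using conj by (rule K_cohn_eq)
  moreover have "\<forall>d\<in>rotate1 ` Df. closed_path (r f) d"
    using ghost_closed_path_edge(2) closed f by (auto simp: Df_def)
  ultimately show "loop_rel (r f) k (rotate1 ` {d\<in>D. hd d = f}) (c \<circ> inv rotate1)"
    using fin k fE unfolding loop_rel_def Df_def by auto
qed

lemma loop_rel_descent:
  assumes rel: "loop_rel w k D c" and d: "d \<in> D"
  obtains w' D' c' where "loop_rel w' k D' c'" "card D' < card D"
  | w' D' c' d' where "loop_rel w' k D' c'" "card D' = card D" "d' \<in> D'"
      "unique_prefix d' < unique_prefix d"
proof -
  have fin: "finite D" and w: "w \<in> E0" and closed: "\<forall>d\<in>D. closed_path w d"
    using rel by (auto simp: loop_rel_def)
  have heads: "\<forall>d\<in>D. hd d \<in> out_edges w" using closed closed_path_hd by blast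
  show thesis
  proof (cases "unique_out w")
    case True
    then obtain f where f: "out_edges w = {f}" by (auto simp: unique_out_def)
    then have all: "{d\<in>D. hd d = f} = D" using heads by auto
    have shorter: "unique_prefix (rotate1 d) < unique_prefix d"
      using d closed heads True f closed_path_leaves_unique_out[OF condL, of w d]
      by (intro unique_prefix_rotate1) (auto simp: closed_path_def out_edges_def)
    have rotated: "loop_rel (r f) k (rotate1 ` D) (c \<circ> inv rotate1)" "card (rotate1 ` D) = card D"
      using loop_rel_rotate[OF rel, of f] f unfolding all by auto
    show thesis using d by (intro that(2)[OF rotated _ shorter]) blast
  next
    case False
    then obtain f where f: "f \<in> out_edges w" and smaller: "card {d\<in>D. hd d = f} < card D"
      using exists_proper_branch[OF fin _ heads w] loop_rel_not_Y[OF rel] d by blast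
    show thesis
      using smaller loop_rel_rotate[OF rel f]
      by (intro that(1)[of "r f" "rotate1 ` {d\<in>D. hd d = f}"]) auto
  qed
qed

lemma no_loop_rel: "\<not> loop_rel w k D c"
proof
  assume "loop_rel w k D c"
  then show False
  proof (induction "card D" arbitrary: w D c rule: less_induct)
    case less
    note smaller_card = less.hyps
    show False
    proof (cases "D = {}")
      case True
      then show False using less.prems smult_vtx_notin_K by (auto simp: loop_rel_def)
    next
      case False
      then obtain d where d: "d \<in> D" by blast
      have "loop_rel w' k D' c' \<Longrightarrow> card D' = card D \<Longrightarrow> d' \<in> D' \<Longrightarrow> False" for w' D' c' d'
      proof (induction "unique_prefix d'" arbitrary: w' D' c' d' rule: less_induct)
        case less
        show False
        proof (rule loop_rel_descent[OF less.prems(1) less.prems(3)])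
          fix w'' D'' c'' assume "loop_rel w'' k D'' c''" "card D'' < card D'"
          then show False using smaller_card less.prems(2) by auto
        next
          fix w'' D'' c'' d''
          assume "loop_rel w'' k D'' c''" "card D'' = card D'" "d'' \<in> D''"
            "unique_prefix d'' < unique_prefix d'"
          then show False using less.hyps less.prems(2) by auto
        qed
      qed
      then show False using less.prems d by blast
    qed
  qed
qed

lemma ghost_path_mult_path_comb:
  assumes "\<forall>g\<in>G. path_to w g" "path_to w g0" "in_FA T"
    and "\<forall>g\<in>G. c g \<noteq> 0 \<longrightarrow> length g0 \<le> length g"
  defines "n \<equiv> length g0"
  shows "ghost_path w g0 * (\<Sum>g\<in>G. smult (c g) (path w g * T))
    \<approx> (\<Sum>g\<in>G. if c g \<noteq> 0 \<and> take n g = g0 \<and> path_src w (drop n g) = w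
              then smult (c g) (path w (drop n g) * T) else 0)"
proof -
  have "ghost_path w g0 * (\<Sum>g\<in>G. smult (c g) (path w g * T))
      = (\<Sum>g\<in>G. smult (c g) ((ghost_path w g0 * path w g) * T))"
    by (simp add: sum_distrib_left mult.assoc)
  also have "\<dots> \<approx> (\<Sum>g\<in>G. if c g \<noteq> 0 \<and> take n g = g0 \<and> path_src w (drop n g) = w
              then smult (c g) (path w (drop n g) * T) else 0)"
  proof (intro cohn_eq_sum)
    fix g assume g: "g \<in> G"
    show "smult (c g) ((ghost_path w g0 * path w g) * T) \<approx> (if c g \<noteq> 0 \<and> take n g = g0
        \<and> path_src w (drop n g) = w then smult (c g) (path w (drop n g) * T) else 0)"
    proof (cases "c g = 0")
      case False
      then have "(ghost_path w g0 * path w g) * T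
          \<approx> (if take n g = g0 \<and> path_src w (drop n g) = w then path w (drop n g) else 0) * T"
        using ghost_path_path[of w g0 g] assms g unfolding n_def by (intro cohn_eq_mult_right) auto
      then show ?thesis using False by (auto dest: cohn_eq_smult[of _ _ "c g"])
    qed simp
  qed
  finally show ?thesis .
qed

lemma strip_shortest_path:
  assumes fin: "finite G" and paths: "\<forall>g\<in>G. path_to w g" and T: "in_FA T"
    and K: "K (\<Sum>g\<in>G. smult (c g) (path w g * T))"
    and g0: "g0 \<in> G" "c g0 \<noteq> 0" and shortest: "\<forall>g\<in>G. c g \<noteq> 0 \<longrightarrow> length g0 \<le> length g"
  obtains D c' where "finite D" "\<forall>d\<in>D. closed_path w d"
    "K (smult (c g0) (vtx w * T) + (\<Sum>d\<in>D. smult (c' d) (path w d * T)))"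
proof -
  define n where "n = length g0"
  define P where "P g \<longleftrightarrow> c g \<noteq> 0 \<and> take n g = g0 \<and> path_src w (drop n g) = w" for g
  define G' where "G' = {g\<in>G. P g} - {g0}"
  have extends: "g = g0 @ drop n g" if "g \<in> G'" for g
    using that append_take_drop_id[of n g] by (simp add: G'_def P_def)
  have "inj_on (drop n) G'" by (metis extends inj_onI)
  have "ghost_path w g0 * (\<Sum>g\<in>G. smult (c g) (path w g * T))
      \<approx> (\<Sum>g\<in>G. if P g then smult (c g) (path w (drop n g) * T) else 0)"
    unfolding P_def n_def using paths g0
    by (intro ghost_path_mult_path_comb[OF paths _ T shortest]) auto
  also have "\<dots> = (\<Sum>g\<in>{g\<in>G. P g}. smult (c g) (path w (drop n g) * T))"
    using fin by (rule sum.inter_filter[symmetric])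
  also have "\<dots> = smult (c g0) (vtx w * T) + (\<Sum>g\<in>G'. smult (c g) (path w (drop n g) * T))"
    using fin g0 by (simp add: sum.remove[of _ g0] G'_def P_def n_def)
  also have "(\<Sum>g\<in>G'. smult (c g) (path w (drop n g) * T))
      = (\<Sum>g\<in>G'. smult (c (g0 @ drop n g)) (path w (drop n g) * T))"
    using extends by (intro sum.cong) auto
  also have "\<dots> = (\<Sum>d\<in>drop n ` G'. smult (c (g0 @ d)) (path w d * T))"
    using \<open>inj_on (drop n) G'\<close> by (simp add: sum.reindex)
  finally have eq: "ghost_path w g0 * (\<Sum>g\<in>G. smult (c g) (path w g * T))
      \<approx> smult (c g0) (vtx w * T) + (\<Sum>d\<in>drop n ` G'. smult (c (g0 @ d)) (path w d * T))" .
  have "K (ghost_path w g0 * (\<Sum>g\<in>G. smult (c g) (path w g * T)))"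
    using K paths g0 by (intro K_mult_left) auto
  then have "K (smult (c g0) (vtx w * T) + (\<Sum>d\<in>drop n ` G'. smult (c (g0 @ d)) (path w d * T)))"
    using eq by (rule K_cohn_eq)
  moreover have "closed_path w d" if "d \<in> drop n ` G'" for d
    using that extends paths path_to_drop by (fastforce simp: G'_def P_def closed_path_def)
  moreover have "finite (drop n ` G')" using fin by (simp add: G'_def)
  ultimately show thesis by (intro that[of "drop n ` G'" "\<lambda>d. c (g0 @ d)"]) auto
qed

lemma nontrivial_path_relation:
  assumes fin: "finite I" and inj: "inj_on p I" and paths: "\<forall>i\<in>I. path_to w (p i)"
    and T: "in_FA T" and K: "K (\<Sum>i\<in>I. smult (c i) (path w (p i) * T))"
    and nonzero: "i \<in> I" "c i \<noteq> 0"
  obtains k D c' where "k \<noteq> 0" "finite D" "\<forall>d\<in>D. closed_path w d"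
    "K (smult k (vtx w * T) + (\<Sum>d\<in>D. smult (c' d) (path w d * T)))"
proof -
  define G where "G = p ` I"
  define cg where "cg g = c (the_inv_into I p g)" for g
  have "(\<Sum>i\<in>I. smult (c i) (path w (p i) * T)) = (\<Sum>g\<in>G. smult (cg g) (path w g * T))"
    using inj by (simp add: G_def cg_def sum.reindex the_inv_into_f_f)
  then have KG: "K (\<Sum>g\<in>G. smult (cg g) (path w g * T))" using K by simp
  have "p i \<in> G \<and> cg (p i) \<noteq> 0" using nonzero inj by (simp add: G_def cg_def the_inv_into_f_f)
  then obtain g0 where g0: "g0 \<in> G" "cg g0 \<noteq> 0"
    and shortest: "\<forall>g\<in>G. cg g \<noteq> 0 \<longrightarrow> length g0 \<le> length g"
    using ex_has_least_nat[of "\<lambda>g. g \<in> G \<and> cg g \<noteq> 0" _ length] by blast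
  have "finite G" "\<forall>g\<in>G. path_to w g" using fin paths by (auto simp: G_def)
  then obtain D c' where "finite D" "\<forall>d\<in>D. closed_path w d"
    "K (smult (cg g0) (vtx w * T) + (\<Sum>d\<in>D. smult (c' d) (path w d * T)))"
    using strip_shortest_path[OF _ _ T KG g0 shortest] by blast
  then show thesis by (rule that[OF g0(2)])
qed

lemma path_vtx_relation_trivial:
  assumes "finite I" "inj_on p I" "\<forall>i\<in>I. path_to w (p i)"
    and K: "K (\<Sum>i\<in>I. smult (c i) (path w (p i) * vtx w))"
  shows "\<forall>i\<in>I. c i = 0"
proof (rule ccontr)
  assume "\<not> ?thesis"
  then obtain i where i: "i \<in> I" "c i \<noteq> 0" by blast
  then have w: "w \<in> E0" using assms(3) path_to_E0 by blast
  obtain k D c' where D: "k \<noteq> 0" "finite D" "\<forall>d\<in>D. closed_path w d"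
    and KD: "K (smult k (vtx w * vtx w) + (\<Sum>d\<in>D. smult (c' d) (path w d * vtx w)))"
    using nontrivial_path_relation[OF assms(1-3) _ K i] w by auto
  have "smult k (vtx w * vtx w) + (\<Sum>d\<in>D. smult (c' d) (path w d * vtx w))
      \<approx> smult k (vtx w) + (\<Sum>d\<in>D. smult (c' d) (path w d))"
    using D(3) w vtx_vtx_rel[OF w w] path_vtx[of w _ w]
    by (intro cohn_eq_add cohn_eq_smult cohn_eq_sum) (auto simp: closed_path_def)
  with KD have "loop_rel w k D c'"
    using D w unfolding loop_rel_def by (auto intro: K_cohn_eq)
  then show False using no_loop_rel by blast
qed

lemma path_q_relation_trivial:
  assumes "finite I" "inj_on p I" "\<forall>i\<in>I. path_to w (p i)" and Y: "w \<in> Reg E0 E1 s - X"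
    and K: "K (\<Sum>i\<in>I. smult (c i) (path w (p i) * q w))"
  shows "\<forall>i\<in>I. c i = 0"
proof (rule ccontr)
  assume "\<not> ?thesis"
  then obtain i where i: "i \<in> I" "c i \<noteq> 0" by blast
  have w: "w \<in> E0" using Y Reg_in_E0 by auto
  obtain k D c' where D: "k \<noteq> 0" "finite D" "\<forall>d\<in>D. closed_path w d"
    and KD: "K (smult k (vtx w * q w) + (\<Sum>d\<in>D. smult (c' d) (path w d * q w)))"
    using nontrivial_path_relation[OF assms(1-3) _ K i] w by auto
  have "K (q w * (smult k (vtx w * q w) + (\<Sum>d\<in>D. smult (c' d) (path w d * q w))))"
    using KD w by (intro K_mult_left) auto
  then have "K (smult k (q w * q w))"
    using q_mult_loop_comb[of w D "q w" k c'] Y D w by (auto intro: K_cohn_eq)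
  then have "K (smult k (q w))"
    using q_q[of w] Y by (auto intro: K_cohn_eq)
  then show False using smult_q_notin_K D Y by blast
qed

lemma ghostless_coeffs_vanish:
  assumes "finite T" "\<forall>t\<in>T. valid_mon t \<and> ghost_src t = b \<and> mghost t = []" "K (lin_comb T c)"
  shows "\<forall>t\<in>T. c t = 0"
proof -
  have "lin_comb T c = (\<Sum>t\<in>T. smult (c t) (path b (mpath t) * vtx b))"
    unfolding lin_comb_def using assms(2) by (intro sum.cong refl) (simp add: ghostless_mon(3))
  then have K: "K (\<Sum>t\<in>T. smult (c t) (path b (mpath t) * vtx b))" using assms(3) by simp
  have inj: "inj_on mpath T" using inj_on_ghostless_paths[OF assms(2), of "[]"] by simp
  have paths: "\<forall>t\<in>T. path_to b (mpath t)" using assms(2) ghostless_mon(2) by blast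
  show ?thesis by (rule path_vtx_relation_trivial[OF assms(1) inj paths K])
qed

lemma ghostless_coeffs_vanish_Y:
  assumes T: "finite T" "\<forall>t\<in>T. valid_mon t \<and> ghost_src t = b" and K: "K (lin_comb T c)"
    and Y: "b \<in> Reg E0 E1 s - X"
  shows "\<forall>t\<in>T. mghost t = [] \<longrightarrow> c t = 0"
proof -
  define T0 where "T0 = {t\<in>T. mghost t = []}"
  have T0: "\<forall>t\<in>T0. valid_mon t \<and> ghost_src t = b \<and> mghost t = []" using T by (simp add: T0_def)
  have b: "b \<in> E0" using Y Reg_in_E0 by blast
  have "lin_comb T c * q b = (\<Sum>t\<in>T. smult (c t) (mon t * q b))"
    by (simp add: lin_comb_def sum_distrib_right)
  also have "\<dots> \<approx> (\<Sum>t\<in>T. if mghost t = [] then smult (c t) (path b (mpath t) * q b) else 0)"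
  proof (intro cohn_eq_sum)
    fix t assume t: "t \<in> T"
    show "smult (c t) (mon t * q b)
        \<approx> (if mghost t = [] then smult (c t) (path b (mpath t) * q b) else 0)"
    proof (cases "mghost t = []")
      case True
      have "path b (mpath t) * (vtx b * q b) \<approx> (path b (mpath t) * q b :: ('v, 'e, 'k) ncpoly)"
        using vtx_q[OF b] ghostless_mon(2)[of t b] t T True by (intro cohn_eq_mult_left) auto
      moreover have "mon t = (path b (mpath t) * vtx b :: ('v, 'e, 'k) ncpoly)"
        using True t T by (intro ghostless_mon(3)) auto
      ultimately have "mon t * q b \<approx> (path b (mpath t) * q b :: ('v, 'e, 'k) ncpoly)"
        by (simp add: mult.assoc)
      then show ?thesis using True by (auto dest: cohn_eq_smult[of _ _ "c t"])
    next
      case False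
      have "path (mvtx t) (mpath t) * (ghost_path (mvtx t) (mghost t) * q b)
          \<approx> path (mvtx t) (mpath t) * 0"
        using t T False Y
        by (intro cohn_eq_mult_left ghost_path_q) (auto simp: valid_mon_def ghost_src_def)
      then show ?thesis
        using False by (auto simp: mon_def mult.assoc dest: cohn_eq_smult[of _ _ "c t"])
    qed
  qed
  also have "\<dots> = (\<Sum>t\<in>T0. smult (c t) (path b (mpath t) * q b))"
    using T(1) by (simp add: T0_def sum.inter_filter)
  finally have eq: "lin_comb T c * q b \<approx> (\<Sum>t\<in>T0. smult (c t) (path b (mpath t) * q b))" .
  have "K (lin_comb T c * q b)" using K b by (intro K_mult_right) auto
  then have "K (\<Sum>t\<in>T0. smult (c t) (path b (mpath t) * q b))" using eq by (rule K_cohn_eq)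
  moreover have "finite T0" using T(1) by (simp add: T0_def)
  moreover have "inj_on mpath T0" using inj_on_ghostless_paths[OF T0, of "[]"] by simp
  moreover have "\<forall>t\<in>T0. path_to b (mpath t)" using T0 ghostless_mon(2) by blast
  ultimately have "\<forall>t\<in>T0. c t = 0" using path_q_relation_trivial[OF _ _ _ Y] by blast
  then show ?thesis by (simp add: T0_def)
qed

lemma ghostless_coeffs_vanish_infinite:
  assumes T: "finite T" "\<forall>t\<in>T. valid_mon t \<and> ghost_src t = b" and K: "K (lin_comb T c)"
    and inf: "b \<notin> Reg E0 E1 s" and t1: "t1 \<in> T" "mghost t1 \<noteq> []"
  shows "\<forall>t\<in>T. mghost t = [] \<longrightarrow> c t = 0"
proof -
  define T0 where "T0 = {t\<in>T. mghost t = []}"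
  have T0: "\<forall>t\<in>T0. valid_mon t \<and> ghost_src t = b \<and> mghost t = []" using T by (simp add: T0_def)
  have heads: "hd (mghost t) \<in> out_edges b" if "t \<in> T" "mghost t \<noteq> []" for t
    using that T by (cases "mghost t") (auto simp: valid_mon_def ghost_src_def out_edges_def)
  have "b \<in> E0" using t1 T ghost_src_in_E0[of t1] by simp
  moreover have "out_edges b \<noteq> {}" using heads[OF t1] by blast
  ultimately have "infinite (out_edges b)"
    using inf unfolding Reg_def out_edges_def by blast
  then obtain f where f: "f \<in> out_edges b" "f \<notin> (\<lambda>t. hd (mghost t)) ` (T - T0)"
    using T(1) by (meson finite_Diff finite_imageI finite_subset subsetI)
  have "{t\<in>T. mghost t = [] \<or> hd (mghost t) = f} = T0" using f by (auto simp: T0_def)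
  then have "lin_comb T c * edge f \<approx> (\<Sum>t\<in>T0. smult (c t) (mon (absorb f t)))"
    using lin_comb_mult_edge[OF T f(1), of c] by simp
  also have "\<dots> = (\<Sum>t\<in>T0. smult (c t) (path (r f) (mpath t @ [f]) * vtx (r f)))"
    by (simp add: absorb_def T0_def)
  finally have eq: "lin_comb T c * edge f
      \<approx> (\<Sum>t\<in>T0. smult (c t) (path (r f) (mpath t @ [f]) * vtx (r f)))" .
  have "K (lin_comb T c * edge f)" using K f(1) by (intro K_mult_right) (auto dest: out_edgesD)
  then have "K (\<Sum>t\<in>T0. smult (c t) (path (r f) (mpath t @ [f]) * vtx (r f)))"
    using eq by (rule K_cohn_eq)
  moreover have "\<forall>t\<in>T0. path_to (r f) (mpath t @ [f])"
  proof
    fix t assume "t \<in> T0"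
    then have "path_to b (mpath t)" using T0 ghostless_mon(2) by blast
    then show "path_to (r f) (mpath t @ [f])"
      using path_snoc[of b "mpath t" f] f(1) by (auto dest: out_edgesD)
  qed
  moreover have "finite T0" using T(1) by (simp add: T0_def)
  ultimately have "\<forall>t\<in>T0. c t = 0"
    using inj_on_ghostless_paths[OF T0, of "[f]"] path_vtx_relation_trivial by blast
  then show ?thesis by (simp add: T0_def)
qed

definition K_trivial_below :: "nat \<Rightarrow> bool" where
  "K_trivial_below n \<longleftrightarrow> (\<forall>T c. finite T \<longrightarrow> (\<forall>t\<in>T. valid_mon t \<and> length (mghost t) < n)
     \<longrightarrow> K (lin_comb T c) \<longrightarrow> lin_comb T c \<approx> 0)"

lemma K_trivial_below_mult_edge:
  assumes IH: "K_trivial_below n" "0 < n"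
    and T: "finite T" "\<forall>t\<in>T. valid_mon t \<and> ghost_src t = b \<and> length (mghost t) \<le> n"
    and K: "K (lin_comb T c)" and e: "e \<in> out_edges b"
  shows "lin_comb T c * edge e \<approx> 0"
proof -
  define T\<^sub>e where "T\<^sub>e = {t\<in>T. mghost t = [] \<or> hd (mghost t) = e}"
  define c' where "c' u = (\<Sum>t\<in>{t\<in>T\<^sub>e. absorb e t = u}. c t)" for u
  have fin: "finite T\<^sub>e" using T(1) by (simp add: T\<^sub>e_def)
  have "lin_comb T c * edge e \<approx> (\<Sum>t\<in>T\<^sub>e. smult (c t) (mon (absorb e t)))"
    unfolding T\<^sub>e_def using T e by (intro lin_comb_mult_edge) auto
  also have "\<dots> = lin_comb (absorb e ` T\<^sub>e) c'"
    using fin by (simp add: lin_comb_def c'_def sum_smult_image)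
  finally have eq: "lin_comb T c * edge e \<approx> lin_comb (absorb e ` T\<^sub>e) c'" .
  have "K (lin_comb T c * edge e)" using K e by (intro K_mult_right) (auto dest: out_edgesD)
  then have "K (lin_comb (absorb e ` T\<^sub>e) c')" using eq by (rule K_cohn_eq)
  moreover have "\<forall>u\<in>absorb e ` T\<^sub>e. valid_mon u \<and> length (mghost u) < n"
    using T e IH(2) valid_absorb by (fastforce simp: T\<^sub>e_def)
  ultimately have "lin_comb (absorb e ` T\<^sub>e) c' \<approx> 0"
    using IH(1) fin unfolding K_trivial_below_def by blast
  with eq show ?thesis by (rule cohn_eq_trans)
qed

lemma K_trivial_at_source:
  assumes IH: "K_trivial_below n"
    and T: "finite T" "\<forall>t\<in>T. valid_mon t \<and> ghost_src t = b \<and> length (mghost t) \<le> n"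
    and K: "K (lin_comb T c)"
  shows "lin_comb T c \<approx> 0"
proof (cases "\<forall>t\<in>T. mghost t = []")
  case True
  then have "\<forall>t\<in>T. c t = 0" using ghostless_coeffs_vanish T K by blast
  then show ?thesis by (simp add: lin_comb_def)
next
  case False
  then obtain t1 where t1: "t1 \<in> T" "mghost t1 \<noteq> []" by blast
  then have n: "0 < n" using T by (metis length_greater_0_conv order_less_le_trans)
  have b: "b \<in> E0" using t1 T ghost_src_in_E0[of t1] by simp
  have valid: "\<forall>t\<in>T. valid_mon t" using T by blast
  have edge_zero: "lin_comb T c * edge e \<approx> 0" if "e \<in> out_edges b" for e
    using K_trivial_below_mult_edge[OF IH n T K that] .
  show ?thesis
  proof (cases "b \<in> X")
    case True
    have "lin_comb T c * vtx b \<approx> lin_comb {t\<in>T. ghost_src t = b} c"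
      using lin_comb_mult_vtx[OF T(1) valid b] .
    also have "{t\<in>T. ghost_src t = b} = T" using T by auto
    finally have "lin_comb T c \<approx> lin_comb T c * vtx b" by (rule cohn_eq_sym)
    also have "\<dots> \<approx> lin_comb T c * ee b"
      using vtx_ee_rel[OF True] valid by (intro cohn_eq_mult_left in_FA_lin_comb)
    also have "\<dots> = (\<Sum>e\<in>out_edges b. (lin_comb T c * edge e) * ghost e)"
      by (simp add: ee_def sum_distrib_left mult.assoc)
    also have "\<dots> \<approx> (\<Sum>e\<in>out_edges b. 0 * ghost e)"
      using edge_zero by (intro cohn_eq_sum cohn_eq_mult_right) (auto dest: out_edgesD)
    finally show ?thesis by simp
  next
    case False
    define T1 where "T1 = {t\<in>T. mghost t \<noteq> []}"
    have "\<forall>t\<in>T. mghost t = [] \<longrightarrow> c t = 0"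
      using ghostless_coeffs_vanish_Y[OF T(1) _ K]
        ghostless_coeffs_vanish_infinite[OF T(1) _ K _ t1] False T by blast
    then have eq: "lin_comb T c = lin_comb T1 c"
      unfolding lin_comb_def T1_def using T(1) by (intro sum.mono_neutral_right) auto
    have T1: "finite T1" "\<forall>t\<in>T1. valid_mon t \<and> ghost_src t = b \<and> mghost t \<noteq> []"
      using T by (auto simp: T1_def)
    have "lin_comb T1 c \<approx> (\<Sum>e\<in>(\<lambda>t. hd (mghost t)) ` T1. (lin_comb T1 c * edge e) * ghost e)"
      by (rule lin_comb_ghost_expansion[OF T1])
    also have "\<dots> \<approx> (\<Sum>e\<in>(\<lambda>t. hd (mghost t)) ` T1. 0 * ghost e)"
    proof (intro cohn_eq_sum cohn_eq_mult_right)
      fix e assume "e \<in> (\<lambda>t. hd (mghost t)) ` T1"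
      then have "e \<in> out_edges b"
        using T1 by (force simp: valid_mon_def ghost_src_def out_edges_def neq_Nil_conv)
      then show "in_FA (ghost e)" "lin_comb T1 c * edge e \<approx> 0"
        using edge_zero eq by (auto dest: out_edgesD)
    qed
    finally show ?thesis using eq by simp
  qed
qed

lemma K_trivial_below_Suc: "K_trivial_below n \<Longrightarrow> K_trivial_below (Suc n)"
  unfolding K_trivial_below_def[of "Suc n"]
proof (intro allI impI)
  fix T c
  assume IH: "K_trivial_below n" and T: "finite T" "\<forall>t\<in>T. valid_mon t \<and> length (mghost t) < Suc n"
    and K: "K (lin_comb T c)"
  define T\<^sub>b where "T\<^sub>b b = {t\<in>T. ghost_src t = b}" for b
  have "lin_comb T c = (\<Sum>b\<in>ghost_src ` T. lin_comb (T\<^sub>b b) c)"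
    unfolding lin_comb_def T\<^sub>b_def using T(1) by (rule sum.image_gen)
  also have "\<dots> \<approx> (\<Sum>b\<in>ghost_src ` T. 0)"
  proof (intro cohn_eq_sum)
    fix b assume "b \<in> ghost_src ` T"
    then have b: "b \<in> E0" using T ghost_src_in_E0 by auto
    have "K (lin_comb T c * vtx b)" using K b by (intro K_mult_right) auto
    then have "K (lin_comb (T\<^sub>b b) c)"
      using lin_comb_mult_vtx[OF T(1) _ b] T unfolding T\<^sub>b_def by (blast intro: K_cohn_eq)
    then show "lin_comb (T\<^sub>b b) c \<approx> 0"
      using T by (intro K_trivial_at_source[OF IH, of "T\<^sub>b b" b])
        (auto simp: T\<^sub>b_def less_Suc_eq_le)
  qed
  finally show "lin_comb T c \<approx> 0" by simp
qed

lemma K_trivial_below: "K_trivial_below n"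
proof (induction n)
  case 0
  then show ?case by (simp add: K_trivial_below_def lin_comb_def)
next
  case (Suc n)
  then show ?case by (rule K_trivial_below_Suc)
qed

theorem kernel_trivial: "K x \<Longrightarrow> x \<approx> 0"
proof -
  assume K: "K x"
  then have "spanned x" using K_in_FA in_FA_spanned by blast
  then obtain T c where T: "finite T" "\<forall>t\<in>T. valid_mon t" and x: "x \<approx> lin_comb T c"
    unfolding spanned_def by blast
  define n where "n = Suc (Max (insert 0 ((\<lambda>t. length (mghost t)) ` T)))"
  have "\<forall>t\<in>T. valid_mon t \<and> length (mghost t) < n"
    using T by (auto simp: n_def less_Suc_eq_le)
  moreover have "K (lin_comb T c)" using K x by (rule K_cohn_eq)
  ultimately have "lin_comb T c \<approx> 0"
    using K_trivial_below[of n] T(1) unfolding K_trivial_below_def by blast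
  with x show "x \<approx> 0" by (rule cohn_eq_trans)
qed
end

section \<open>Homomorphisms out of the Cohn path algebra\<close>

context cohn_graph
begin

definition cls :: "('v, 'e, 'k::field) ncpoly \<Rightarrow> ('v, 'e, 'k) fa set" where
  "cls x = cclass E0 E1 r s X (coeffs x)"

lemma mem_cls_iff: "g \<in> cls x \<longleftrightarrow> in_FA (NCPoly g) \<and> NCPoly g \<approx> x"
  by (simp add: cls_def cclass_def in_FA_def cohn_eq_def in_ideal_def)

lemma cls_eq_iff: "in_FA x \<Longrightarrow> in_FA y \<Longrightarrow> cls x = cls y \<longleftrightarrow> x \<approx> y"
  unfolding set_eq_iff mem_cls_iff
  by (metis cohn_eq_refl cohn_eq_sym cohn_eq_trans in_FA_def ncpoly.collapse)

lemma cls_in_Cohn: "in_FA x \<Longrightarrow> cls x \<in> Cohn E0 E1 r s X"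
  by (auto simp: Cohn_def cls_def in_FA_def)

lemma Cohn_cls:
  assumes "S \<in> Cohn E0 E1 r s X"
  obtains x :: "('v, 'e, 'k::field) ncpoly" where "in_FA x" "S = cls x"
  using assms by (auto simp: Cohn_def cls_def in_FA_def intro: that[of "NCPoly _"])

lemma crep_cls: "in_FA x \<Longrightarrow> in_FA (NCPoly (crep (cls x))) \<and> NCPoly (crep (cls x)) \<approx> x"
  using someI[of "\<lambda>g. g \<in> cls x" "coeffs x"] by (simp add: crep_def mem_cls_iff)

lemma cohn_add_cls:
  "in_FA x \<Longrightarrow> in_FA y \<Longrightarrow> cohn_add E0 E1 r s X (cls x) (cls y) = cls (x + y)"
  using crep_cls[of x] crep_cls[of y]
    cls_eq_iff[of "NCPoly (crep (cls x)) + NCPoly (crep (cls y))" "x + y"]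
  by (auto simp: cohn_add_def cls_def)

lemma cohn_mult_cls:
  "in_FA x \<Longrightarrow> in_FA y \<Longrightarrow> cohn_mult E0 E1 r s X (cls x) (cls y) = cls (x * y)"
  using crep_cls[of x] crep_cls[of y]
    cls_eq_iff[of "NCPoly (crep (cls x)) * NCPoly (crep (cls y))" "x * y"]
  by (auto simp: cohn_mult_def cls_def intro: cohn_eq_mult)

lemma cohn_ring_hom_cls:
  assumes "cohn_ring_hom E0 E1 r s X \<pi>" "in_FA x" "in_FA y"
  shows "\<pi> (cls (x + y)) = \<pi> (cls x) + \<pi> (cls y)" "\<pi> (cls (x * y)) = \<pi> (cls x) * \<pi> (cls y)"
  using assms cls_in_Cohn cohn_add_cls cohn_mult_cls unfolding cohn_ring_hom_def by metis+

lemma cohn_kernel_of_hom: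
  assumes hom: "cohn_ring_hom E0 E1 r s X \<pi>" and condL: "rel_condL E0 E1 r s X"
    and vtx: "\<forall>u \<in> E0 - (Reg E0 E1 s - X). \<pi> (cclass E0 E1 r s X (gen (Vx u))) \<noteq> 0"
    and q: "\<forall>v \<in> Reg E0 E1 s - X. \<pi> (cclass E0 E1 r s X (gen (Vx v) - ee_sum E1 s v)) \<noteq> 0"
  shows "cohn_kernel E0 E1 r s X (\<lambda>x. in_FA x \<and> \<pi> (cls x) = 0)"
proof unfold_locales
  show "in_FA y \<and> \<pi> (cls y) = 0" if "in_FA x \<and> \<pi> (cls x) = 0" "x \<approx> y" for x y
    using that cls_eq_iff cohn_eq_in_FA by metis
qed (use hom cohn_ring_hom_cls[OF hom] vtx q condL in
      \<open>auto simp: cls_def gen_poly_def q_def coeffs_ee\<close>)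

lemma inj_on_Cohn_if_kernel_trivial:
  fixes \<pi> :: "('v, 'e, 'k::field) fa set \<Rightarrow> 'a::ring"
  assumes hom: "cohn_ring_hom E0 E1 r s X \<pi>"
    and trivial: "\<And>x. in_FA x \<Longrightarrow> \<pi> (cls x) = 0 \<Longrightarrow> x \<approx> 0"
  shows "inj_on \<pi> (Cohn E0 E1 r s X)"
proof (rule inj_onI)
  fix S T assume S: "S \<in> Cohn E0 E1 r s X" and T: "T \<in> Cohn E0 E1 r s X" and eq: "\<pi> S = \<pi> T"
  obtain x y :: "('v, 'e, 'k) ncpoly" where x: "in_FA x" "S = cls x" and y: "in_FA y" "T = cls y"
    using Cohn_cls[OF S] Cohn_cls[OF T] by metis
  have "\<pi> (cls x) = \<pi> (cls (y + (x - y)))" by simp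
  also have "\<dots> = \<pi> (cls y) + \<pi> (cls (x - y))" using x y by (intro cohn_ring_hom_cls[OF hom]) auto
  finally have "x - y \<approx> 0" using eq x y by (intro trivial) auto
  then show "S = T" using x y cls_eq_iff[OF x(1) y(1)] by (simp add: cohn_eq_def)
qed
end

theorem mainTheorem6:
  fixes E0 :: "'v set" and E1 :: "'e set" and r s :: "'e \<Rightarrow> 'v" and X :: "'v set"
    and \<pi> :: "('v, 'e, 'k::field) fa set \<Rightarrow> 'a::ring"
  assumes graph: "s ` E1 \<subseteq> E0" "r ` E1 \<subseteq> E0"
    and X: "X \<subseteq> Reg E0 E1 s"
    and condL: "rel_condL E0 E1 r s X"
    and hom: "cohn_ring_hom E0 E1 r s X \<pi>"
    and i: "\<forall>u \<in> E0 - (Reg E0 E1 s - X). \<pi> (cclass E0 E1 r s X (gen (Vx u))) \<noteq> 0"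
    and ii: "\<forall>v \<in> Reg E0 E1 s - X.
               \<pi> (cclass E0 E1 r s X (gen (Vx v) - ee_sum E1 s v)) \<noteq> 0"
    and iii: "\<forall>v \<in> Reg E0 E1 s - X. \<pi> (cclass E0 E1 r s X (ee_sum E1 s v)) \<noteq> 0"
  shows "inj_on \<pi> (Cohn E0 E1 r s X)"
proof -
  interpret cohn_graph E0 E1 r s X using graph X by unfold_locales
  interpret cohn_kernel E0 E1 r s X "\<lambda>x. in_FA x \<and> \<pi> (cls x) = 0"
    using cohn_kernel_of_hom[OF hom condL i ii] .
  show ?thesis using kernel_trivial by (intro inj_on_Cohn_if_kernel_trivial[OF hom]) blast
qed

end
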